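(* Let $A$ be a commutative semiring (not necessarily idempotent). Every finitely presented flat $A$-module is projective.
   Context: Modules over $A$ are commutative monoids with compatible $A$-action; $\otimes_A$ is the tensor product. $M$ is flat if $-\otimes_A M$ is exact (preserves finite limits and finite colimits). $M$ is finitely presented if it is a coequaliser of two homomorphisms between finite free modules $A^k\rightrightarrows A^n$. $M$ is projective if every surjection onto $M$ has a section (equivalently $M$ is a retract of a free module). *)

theory Defs
  imports Main
begin

record ('a, 'm) smod =
  mcarrier :: "'m set"
  mzero :: 'm
  madd :: "'m \<Rightarrow> 'm \<Rightarrow> 'm"
  msmult :: "'a \<Rightarrow> 'm \<Rightarrow> 'm"

definition semimodule :: "('a::comm_semiring_1, 'm) smod \<Rightarrow> bool" where
  "semimodule M \<longleftrightarrow>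
     mzero M \<in> mcarrier M \<and>
     (\<forall>x\<in>mcarrier M. \<forall>y\<in>mcarrier M. madd M x y \<in> mcarrier M) \<and>
     (\<forall>a. \<forall>x\<in>mcarrier M. msmult M a x \<in> mcarrier M) \<and>
     (\<forall>x\<in>mcarrier M. \<forall>y\<in>mcarrier M. \<forall>z\<in>mcarrier M.
        madd M (madd M x y) z = madd M x (madd M y z)) \<and>
     (\<forall>x\<in>mcarrier M. \<forall>y\<in>mcarrier M. madd M x y = madd M y x) \<and>
     (\<forall>x\<in>mcarrier M. madd M (mzero M) x = x) \<and>
     (\<forall>a. \<forall>x\<in>mcarrier M. \<forall>y\<in>mcarrier M.
        msmult M a (madd M x y) = madd M (msmult M a x) (msmult M a y)) \<and>
     (\<forall>a b. \<forall>x\<in>mcarrier M. msmult M (a + b) x = madd M (msmult M a x) (msmult M b x)) \<and>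
     (\<forall>a b. \<forall>x\<in>mcarrier M. msmult M (a * b) x = msmult M a (msmult M b x)) \<and>
     (\<forall>x\<in>mcarrier M. msmult M 1 x = x) \<and>
     (\<forall>x\<in>mcarrier M. msmult M 0 x = mzero M) \<and>
     (\<forall>a. msmult M a (mzero M) = mzero M)"

definition smod_hom :: "('a::comm_semiring_1, 'm) smod \<Rightarrow> ('a, 'n) smod \<Rightarrow> ('m \<Rightarrow> 'n) \<Rightarrow> bool" where
  "smod_hom M N f \<longleftrightarrow>
     (\<forall>x\<in>mcarrier M. f x \<in> mcarrier N) \<and>
     (\<forall>x\<in>mcarrier M. \<forall>y\<in>mcarrier M. f (madd M x y) = madd N (f x) (f y)) \<and>
     f (mzero M) = mzero N \<and>
     (\<forall>a. \<forall>x\<in>mcarrier M. f (msmult M a x) = msmult N a (f x))"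

definition smod_cong :: "('a::comm_semiring_1, 'm) smod \<Rightarrow> ('m \<times> 'm) set \<Rightarrow> bool" where
  "smod_cong M E \<longleftrightarrow> equiv (mcarrier M) E \<and>
     (\<forall>(x, x')\<in>E. \<forall>(y, y')\<in>E. (madd M x y, madd M x' y') \<in> E) \<and>
     (\<forall>a. \<forall>(x, x')\<in>E. (msmult M a x, msmult M a x') \<in> E)"

definition cong_gen :: "('a::comm_semiring_1, 'm) smod \<Rightarrow> ('m \<times> 'm) set \<Rightarrow> ('m \<times> 'm) set" where
  "cong_gen M R = \<Inter> {E. smod_cong M E \<and> R \<subseteq> E}"

definition quot_smod :: "('a::comm_semiring_1, 'm) smod \<Rightarrow> ('m \<times> 'm) set \<Rightarrow> ('a, 'm set) smod" where
  "quot_smod M E = \<lparr> mcarrier = mcarrier M // E,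
     mzero = E `` {mzero M},
     madd = (\<lambda>X Y. E `` {madd M (SOME x. x \<in> X) (SOME y. y \<in> Y)}),
     msmult = (\<lambda>a X. E `` {msmult M a (SOME x. x \<in> X)}) \<rparr>"

definition free_smod :: "'s set \<Rightarrow> ('a::comm_semiring_1, 's \<Rightarrow> 'a) smod" where
  "free_smod S = \<lparr> mcarrier = {\<phi>. finite {s. \<phi> s \<noteq> 0} \<and> (\<forall>s. s \<notin> S \<longrightarrow> \<phi> s = 0)},
     mzero = (\<lambda>_. 0),
     madd = (\<lambda>\<phi> \<psi> s. \<phi> s + \<psi> s),
     msmult = (\<lambda>a \<phi> s. a * \<phi> s) \<rparr>"

definition fin_free :: "nat \<Rightarrow> ('a::comm_semiring_1, nat \<Rightarrow> 'a) smod" where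
  "fin_free n = free_smod {..<n}"

definition sub_smod :: "('a, 'm) smod \<Rightarrow> 'm set \<Rightarrow> ('a, 'm) smod" where
  "sub_smod M S = M\<lparr>mcarrier := S\<rparr>"

definition prod_smod :: "('a, 'm) smod \<Rightarrow> ('a, 'n) smod \<Rightarrow> ('a, 'm \<times> 'n) smod" where
  "prod_smod M N = \<lparr> mcarrier = mcarrier M \<times> mcarrier N,
     mzero = (mzero M, mzero N),
     madd = (\<lambda>(x, y) (x', y'). (madd M x x', madd N y y')),
     msmult = (\<lambda>a (x, y). (msmult M a x, msmult N a y)) \<rparr>"

definition delta :: "'s \<Rightarrow> 's \<Rightarrow> 'a::comm_semiring_1" where
  "delta x = (\<lambda>y. if y = x then 1 else 0)"

definition tensor_rel :: "('a::comm_semiring_1, 'n) smod \<Rightarrow> ('a, 'm) smod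
    \<Rightarrow> (('n \<times> 'm \<Rightarrow> 'a) \<times> ('n \<times> 'm \<Rightarrow> 'a)) set" where
  "tensor_rel N M = (let F = (free_smod (mcarrier N \<times> mcarrier M) :: ('a, 'n \<times> 'm \<Rightarrow> 'a) smod) in
     {(delta (madd N n n', m), madd F (delta (n, m)) (delta (n', m))) | n n' m.
        n \<in> mcarrier N \<and> n' \<in> mcarrier N \<and> m \<in> mcarrier M} \<union>
     {(delta (n, madd M m m'), madd F (delta (n, m)) (delta (n, m'))) | n m m'.
        n \<in> mcarrier N \<and> m \<in> mcarrier M \<and> m' \<in> mcarrier M} \<union>
     {(delta (msmult N a n, m), msmult F a (delta (n, m))) | a n m.
        n \<in> mcarrier N \<and> m \<in> mcarrier M} \<union>
     {(delta (n, msmult M a m), msmult F a (delta (n, m))) | a n m.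
        n \<in> mcarrier N \<and> m \<in> mcarrier M})"

definition tensor_cong :: "('a::comm_semiring_1, 'n) smod \<Rightarrow> ('a, 'm) smod
    \<Rightarrow> (('n \<times> 'm \<Rightarrow> 'a) \<times> ('n \<times> 'm \<Rightarrow> 'a)) set" where
  "tensor_cong N M = cong_gen (free_smod (mcarrier N \<times> mcarrier M)) (tensor_rel N M)"

definition tensor :: "('a::comm_semiring_1, 'n) smod \<Rightarrow> ('a, 'm) smod
    \<Rightarrow> ('a, ('n \<times> 'm \<Rightarrow> 'a) set) smod" where
  "tensor N M = quot_smod (free_smod (mcarrier N \<times> mcarrier M)) (tensor_cong N M)"

definition push :: "('n \<Rightarrow> 'n') \<Rightarrow> ('n \<times> 'm \<Rightarrow> 'a::comm_semiring_1) \<Rightarrow> ('n' \<times> 'm \<Rightarrow> 'a)" where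
  "push f \<phi> = (\<lambda>(n', m). \<Sum>n\<in>{n. f n = n' \<and> \<phi> (n, m) \<noteq> 0}. \<phi> (n, m))"

text \<open>The map f \<otimes> id_M : N \<otimes> M -> N' \<otimes> M induced by f : N -> N'.\<close>
definition tmap :: "('a::comm_semiring_1, 'n') smod \<Rightarrow> ('a, 'm) smod \<Rightarrow> ('n \<Rightarrow> 'n')
    \<Rightarrow> ('n \<times> 'm \<Rightarrow> 'a) set \<Rightarrow> ('n' \<times> 'm \<Rightarrow> 'a) set" where
  "tmap N' M f X = tensor_cong N' M `` {push f (SOME \<phi>. \<phi> \<in> X)}"

text \<open>The functor - \<otimes>_A M preserves finite limits (terminal object, binary
  products, equalisers) and finite colimits (initial object, binary coproducts,
  coequalisers), tested on all modules whose carrier lies in the type 'u.\<close>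
definition tensor_exact :: "'u itself \<Rightarrow> ('a::comm_semiring_1, 'm) smod \<Rightarrow> bool" where
  "tensor_exact (_::'u itself) M \<longleftrightarrow>
    \<comment> \<open>terminal (= initial) object: the zero module\<close>
    (\<forall>N :: ('a, 'u) smod. semimodule N \<and> (\<exists>z. mcarrier N = {z}) \<longrightarrow>
        (\<exists>z. mcarrier (tensor N M) = {z})) \<and>
    \<comment> \<open>binary products\<close>
    (\<forall>(N1 :: ('a, 'u) smod) (N2 :: ('a, 'u) smod). semimodule N1 \<and> semimodule N2 \<longrightarrow>
        bij_betw (\<lambda>z. (tmap N1 M fst z, tmap N2 M snd z))
          (mcarrier (tensor (prod_smod N1 N2) M))
          (mcarrier (tensor N1 M) \<times> mcarrier (tensor N2 M))) \<and>
    \<comment> \<open>binary coproducts\<close>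
    (\<forall>(N1 :: ('a, 'u) smod) (N2 :: ('a, 'u) smod). semimodule N1 \<and> semimodule N2 \<longrightarrow>
        bij_betw (\<lambda>(y1, y2). madd (tensor (prod_smod N1 N2) M)
                     (tmap (prod_smod N1 N2) M (\<lambda>x. (x, mzero N2)) y1)
                     (tmap (prod_smod N1 N2) M (\<lambda>x. (mzero N1, x)) y2))
          (mcarrier (tensor N1 M) \<times> mcarrier (tensor N2 M))
          (mcarrier (tensor (prod_smod N1 N2) M))) \<and>
    \<comment> \<open>equalisers\<close>
    (\<forall>(N1 :: ('a, 'u) smod) (N2 :: ('a, 'u) smod) f g.
        semimodule N1 \<and> semimodule N2 \<and> smod_hom N1 N2 f \<and> smod_hom N1 N2 g \<longrightarrow>
        (let E = sub_smod N1 {x \<in> mcarrier N1. f x = g x} in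
          inj_on (tmap N1 M id) (mcarrier (tensor E M)) \<and>
          tmap N1 M id ` mcarrier (tensor E M) =
            {y \<in> mcarrier (tensor N1 M). tmap N2 M f y = tmap N2 M g y})) \<and>
    \<comment> \<open>coequalisers\<close>
    (\<forall>(N1 :: ('a, 'u) smod) (N2 :: ('a, 'u) smod) f g.
        semimodule N1 \<and> semimodule N2 \<and> smod_hom N1 N2 f \<and> smod_hom N1 N2 g \<longrightarrow>
        (let R = cong_gen N2 {(f x, g x) | x. x \<in> mcarrier N1};
             Q = quot_smod N2 R;
             q = (\<lambda>y. R `` {y}) in
          tmap Q M q ` mcarrier (tensor N2 M) = mcarrier (tensor Q M) \<and>
          {(y, y'). y \<in> mcarrier (tensor N2 M) \<and> y' \<in> mcarrier (tensor N2 M) \<and>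
                    tmap Q M q y = tmap Q M q y'} =
            cong_gen (tensor N2 M)
              {(tmap N2 M f z, tmap N2 M g z) | z. z \<in> mcarrier (tensor N1 M)}))"

definition flat :: "'u itself \<Rightarrow> ('a::comm_semiring_1, 'm) smod \<Rightarrow> bool" where
  "flat U M \<longleftrightarrow> semimodule M \<and> tensor_exact U M"

text \<open>M is a coequaliser of two homomorphisms A^k \<rightrightarrows> A^n: there is a
  surjective hom h : A^n -> M whose kernel congruence is the congruence generated
  by the pairs (f x, g x).\<close>
definition fin_presented :: "('a::comm_semiring_1, 'm) smod \<Rightarrow> bool" where
  "fin_presented M \<longleftrightarrow>
    (\<exists>k n f g h.
       smod_hom (fin_free k) (fin_free n) f \<and> smod_hom (fin_free k) (fin_free n) g \<and>
       smod_hom (fin_free n) M h \<and>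
       h ` mcarrier (fin_free n) = mcarrier M \<and>
       {(x, y). x \<in> mcarrier (fin_free n) \<and> y \<in> mcarrier (fin_free n) \<and> h x = h y} =
         cong_gen (fin_free n) {(f x, g x) | x. x \<in> mcarrier (fin_free k :: ('a, nat \<Rightarrow> 'a) smod)})"

definition projective :: "'v itself \<Rightarrow> ('a::comm_semiring_1, 'm) smod \<Rightarrow> bool" where
  "projective (_::'v itself) M \<longleftrightarrow>
    (\<forall>(P :: ('a, 'v) smod) p. semimodule P \<and> smod_hom P M p \<and> p ` mcarrier P = mcarrier M \<longrightarrow>
       (\<exists>s. smod_hom M P s \<and> (\<forall>x\<in>mcarrier M. p (s x) = x)))"

end

theory Submission
  imports Defs "HOL-Algebra.FiniteProduct" "HOL-Library.Function_Algebras"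
begin

text \<open>
  Let \<open>h : A\<^sup>n \<rightarrow> M\<close> present \<open>M\<close> as the coequaliser of \<open>f, g : A\<^sup>k \<rightrightarrows> A\<^sup>n\<close>, and let
  \<open>f\<^sup>T, g\<^sup>T : A\<^sup>n \<rightarrow> A\<^sup>k\<close> be the transposed maps.  The canonical element
  \<open>\<xi> = \<Sum>\<^sub>i \<delta>\<^sub>i \<otimes> h \<delta>\<^sub>i\<close> of \<open>A\<^sup>n \<otimes> M\<close> satisfies
  \<open>(f\<^sup>T \<otimes> M) \<xi> = \<Sum>\<^sub>j \<delta>\<^sub>j \<otimes> h (f \<delta>\<^sub>j) = \<Sum>\<^sub>j \<delta>\<^sub>j \<otimes> h (g \<delta>\<^sub>j) = (g\<^sup>T \<otimes> M) \<xi>\<close>.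
  Since \<open>- \<otimes> M\<close> preserves equalisers, \<open>\<xi>\<close> comes from \<open>E \<otimes> M\<close> with
  \<open>E = {e. f\<^sup>T e = g\<^sup>T e}\<close>, say \<open>\<xi> = \<Sum>\<^sub>p c\<^sub>p e\<^sub>p \<otimes> m\<^sub>p\<close> with \<open>e\<^sub>p \<in> E\<close>.
  Contracting with \<open>v \<in> A\<^sup>n\<close> gives \<open>h v = \<Sum>\<^sub>p c\<^sub>p \<langle>e\<^sub>p, v\<rangle> m\<^sub>p\<close>, and because
  \<open>e\<^sub>p \<in> E\<close> the functionals \<open>v \<mapsto> \<langle>e\<^sub>p, v\<rangle>\<close> kill the relations, so they descend to \<open>M\<close>.
  This is a finite dual basis of \<open>M\<close>, which makes \<open>M\<close> a retract of a finite free module.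
\<close>

section \<open>Semimodules and finite sums\<close>

definition smod_monoid :: "('a, 'm) smod \<Rightarrow> 'm monoid" where
  "smod_monoid M = \<lparr>carrier = mcarrier M, mult = madd M, one = mzero M\<rparr>"

definition msum :: "('a, 'm) smod \<Rightarrow> ('i \<Rightarrow> 'm) \<Rightarrow> 'i set \<Rightarrow> 'm" where
  "msum M g A = finprod (smod_monoid M) g A"

lemma smod_monoid_simps [simp]:
  "carrier (smod_monoid M) = mcarrier M"
  "monoid.mult (smod_monoid M) = madd M"
  "monoid.one (smod_monoid M) = mzero M"
  by (simp_all add: smod_monoid_def)

context
  fixes M :: "('a::comm_semiring_1, 'm) smod"
  assumes sm: "semimodule M"
begin

lemma smod_zero_closed [simp]: "mzero M \<in> mcarrier M"
  using sm unfolding semimodule_def by meson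
lemma smod_add_closed [simp]: "x \<in> mcarrier M \<Longrightarrow> y \<in> mcarrier M \<Longrightarrow> madd M x y \<in> mcarrier M"
  using sm unfolding semimodule_def by meson
lemma smod_smult_closed [simp]: "x \<in> mcarrier M \<Longrightarrow> msmult M a x \<in> mcarrier M"
  using sm unfolding semimodule_def by meson
lemma smod_add_assoc: "x \<in> mcarrier M \<Longrightarrow> y \<in> mcarrier M \<Longrightarrow> z \<in> mcarrier M \<Longrightarrow>
    madd M (madd M x y) z = madd M x (madd M y z)"
  using sm unfolding semimodule_def by meson
lemma smod_add_commute: "x \<in> mcarrier M \<Longrightarrow> y \<in> mcarrier M \<Longrightarrow> madd M x y = madd M y x"
  using sm unfolding semimodule_def by meson
lemma smod_add_zero_left [simp]: "x \<in> mcarrier M \<Longrightarrow> madd M (mzero M) x = x"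
  using sm unfolding semimodule_def by meson
lemma smod_smult_add_right: "x \<in> mcarrier M \<Longrightarrow> y \<in> mcarrier M \<Longrightarrow>
    msmult M a (madd M x y) = madd M (msmult M a x) (msmult M a y)"
  using sm unfolding semimodule_def by meson
lemma smod_smult_add_left: "x \<in> mcarrier M \<Longrightarrow> msmult M (a + b) x = madd M (msmult M a x) (msmult M b x)"
  using sm unfolding semimodule_def by meson
lemma smod_smult_mult: "x \<in> mcarrier M \<Longrightarrow> msmult M (a * b) x = msmult M a (msmult M b x)"
  using sm unfolding semimodule_def by meson
lemma smod_smult_one [simp]: "x \<in> mcarrier M \<Longrightarrow> msmult M 1 x = x"
  using sm unfolding semimodule_def by meson
lemma smod_smult_zero_left [simp]: "x \<in> mcarrier M \<Longrightarrow> msmult M 0 x = mzero M"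
  using sm unfolding semimodule_def by meson
lemma smod_smult_zero_right [simp]: "msmult M a (mzero M) = mzero M"
  using sm unfolding semimodule_def by meson

lemma smod_add_zero_right [simp]: "x \<in> mcarrier M \<Longrightarrow> madd M x (mzero M) = x"
  by (metis smod_add_commute smod_add_zero_left smod_zero_closed)

lemma comm_monoid_smod_monoid: "comm_monoid (smod_monoid M)"
  by (rule comm_monoidI) (auto simp: smod_add_assoc intro: smod_add_commute)

interpretation S: comm_monoid "smod_monoid M" by (rule comm_monoid_smod_monoid)

lemma msum_empty [simp]: "msum M g {} = mzero M"
  unfolding msum_def by simp

lemma msum_infinite: "\<not> finite A \<Longrightarrow> msum M g A = mzero M"
  unfolding msum_def by simp

lemma msum_insert:
  "finite A \<Longrightarrow> a \<notin> A \<Longrightarrow> (\<And>x. x \<in> insert a A \<Longrightarrow> g x \<in> mcarrier M) \<Longrightarrow>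
   msum M g (insert a A) = madd M (g a) (msum M g A)"
  unfolding msum_def by (subst S.finprod_insert) auto

lemma msum_closed [simp]: "(\<And>x. x \<in> A \<Longrightarrow> g x \<in> mcarrier M) \<Longrightarrow> msum M g A \<in> mcarrier M"
  unfolding msum_def using S.finprod_closed[of g A] by auto

lemma msum_add:
  "(\<And>x. x \<in> A \<Longrightarrow> f x \<in> mcarrier M) \<Longrightarrow> (\<And>x. x \<in> A \<Longrightarrow> g x \<in> mcarrier M) \<Longrightarrow>
   msum M (\<lambda>x. madd M (f x) (g x)) A = madd M (msum M f A) (msum M g A)"
  unfolding msum_def using S.finprod_multf[of f A g] by auto

lemma msum_cong:
  "A = B \<Longrightarrow> (\<And>x. x \<in> B \<Longrightarrow> f x = g x) \<Longrightarrow> (\<And>x. x \<in> B \<Longrightarrow> g x \<in> mcarrier M) \<Longrightarrow>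
   msum M f A = msum M g B"
  unfolding msum_def by (rule S.finprod_cong') auto

lemma msum_neutral:
  "finite B \<Longrightarrow> A \<subseteq> B \<Longrightarrow> (\<And>x. x \<in> B - A \<Longrightarrow> g x = mzero M) \<Longrightarrow>
   (\<And>x. x \<in> B \<Longrightarrow> g x \<in> mcarrier M) \<Longrightarrow> msum M g A = msum M g B"
  unfolding msum_def by (rule S.finprod_mono_neutral_cong_left) auto

lemma msum_zero: "msum M (\<lambda>_. mzero M) A = mzero M"
  unfolding msum_def using S.finprod_one_eqI[of A "\<lambda>_. mzero M"] by simp

lemma msum_smult:
  "(\<And>x. x \<in> A \<Longrightarrow> g x \<in> mcarrier M) \<Longrightarrow>
   msmult M a (msum M g A) = msum M (\<lambda>x. msmult M a (g x)) A"
proof (induct A rule: infinite_finite_induct)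
  case (infinite A) then show ?case by (simp add: msum_infinite)
next
  case empty then show ?case by simp
next
  case (insert x F)
  have "msum M (\<lambda>x. msmult M a (g x)) (insert x F) =
      madd M (msmult M a (g x)) (msum M (\<lambda>x. msmult M a (g x)) F)"
    by (rule msum_insert) (use insert in auto)
  moreover have "msum M g (insert x F) = madd M (g x) (msum M g F)"
    by (rule msum_insert) (use insert in auto)
  ultimately show ?case using insert by (simp add: smod_smult_add_right)
qed

end

lemma smod_hom_comp: "smod_hom A B f \<Longrightarrow> smod_hom B C g \<Longrightarrow> smod_hom A C (\<lambda>x. g (f x))"
  unfolding smod_hom_def by auto

lemma smod_hom_msum:
  assumes smN: "semimodule N" and smM: "semimodule M" and hom: "smod_hom N M h"
    and "\<And>x. x \<in> A \<Longrightarrow> g x \<in> mcarrier N"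
  shows "h (msum N g A) = msum M (\<lambda>x. h (g x)) A"
  using assms(4)
proof (induct A rule: infinite_finite_induct)
  case (infinite A) then show ?case using hom by (simp add: msum_infinite smN smM smod_hom_def)
next
  case empty then show ?case using hom by (simp add: smN smM smod_hom_def)
next
  case (insert x F)
  have "msum M (\<lambda>x. h (g x)) (insert x F) = madd M (h (g x)) (msum M (\<lambda>x. h (g x)) F)"
    by (rule msum_insert) (use insert hom smM in \<open>auto simp: smod_hom_def\<close>)
  moreover have "msum N g (insert x F) = madd N (g x) (msum N g F)"
    by (rule msum_insert) (use insert smN in auto)
  ultimately show ?case using insert hom smN by (simp add: smod_hom_def)
qed

section \<open>Free modules\<close>

lemma free_simps [simp]:
  "madd (free_smod S :: ('a::comm_semiring_1, 's \<Rightarrow> 'a) smod) = (\<lambda>\<phi> \<psi>. \<phi> + \<psi>)"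
  "mzero (free_smod S :: ('a::comm_semiring_1, 's \<Rightarrow> 'a) smod) = 0"
  "msmult (free_smod S :: ('a::comm_semiring_1, 's \<Rightarrow> 'a) smod) = (\<lambda>a \<phi> s. a * \<phi> s)"
  by (auto simp: free_smod_def fun_eq_iff)

lemma free_carrier:
  "\<phi> \<in> mcarrier (free_smod S) \<longleftrightarrow> finite {s. \<phi> s \<noteq> 0} \<and> (\<forall>s. s \<notin> S \<longrightarrow> \<phi> s = 0)"
  by (simp add: free_smod_def)

lemma free_add_closed:
  "\<phi> \<in> mcarrier (free_smod S) \<Longrightarrow> \<psi> \<in> mcarrier (free_smod S) \<Longrightarrow> \<phi> + \<psi> \<in> mcarrier (free_smod S)"
  unfolding free_carrier
  by (auto intro: finite_subset[of _ "{s. \<phi> s \<noteq> 0} \<union> {s. \<psi> s \<noteq> 0}"])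

lemma free_smult_closed: "\<phi> \<in> mcarrier (free_smod S) \<Longrightarrow> (\<lambda>s. a * \<phi> s) \<in> mcarrier (free_smod S)"
  unfolding free_carrier
  by (auto intro: finite_subset[of _ "{s. \<phi> s \<noteq> 0}"])

lemma free_zero_closed: "(0::'s \<Rightarrow> 'a::comm_semiring_1) \<in> mcarrier (free_smod S)"
  unfolding free_carrier by simp

lemma free_sum_closed:
  "(\<And>i. i \<in> I \<Longrightarrow> \<phi> i \<in> mcarrier (free_smod S)) \<Longrightarrow> (\<Sum>i\<in>I. \<phi> i) \<in> mcarrier (free_smod S)"
  by (induct I rule: infinite_finite_induct) (auto simp: free_zero_closed free_add_closed)

lemma semimodule_free: "semimodule (free_smod S :: ('a::comm_semiring_1, 's \<Rightarrow> 'a) smod)"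
  unfolding semimodule_def
  by (auto simp: free_add_closed free_smult_closed free_zero_closed fun_eq_iff algebra_simps)

lemma msum_free:
  "(\<And>x. x \<in> A \<Longrightarrow> g x \<in> mcarrier (free_smod S)) \<Longrightarrow> msum (free_smod S) g A = (\<Sum>x\<in>A. g x)"
proof (induct A rule: infinite_finite_induct)
  case (infinite A) then show ?case by (simp add: msum_infinite semimodule_free)
next
  case empty then show ?case by (simp add: semimodule_free)
next
  case (insert x F)
  have "msum (free_smod S) g (insert x F) = madd (free_smod S) (g x) (msum (free_smod S) g F)"
    by (rule msum_insert) (use insert semimodule_free in auto)
  then show ?case using insert by simp
qed

definition supp :: "('s \<Rightarrow> 'a::zero) \<Rightarrow> 's set" where
  "supp \<phi> = {s. \<phi> s \<noteq> 0}"

lemma free_finite_supp: "\<phi> \<in> mcarrier (free_smod S) \<Longrightarrow> finite (supp \<phi>)"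
  by (simp add: free_carrier supp_def)

lemma free_supp_subset: "\<phi> \<in> mcarrier (free_smod S) \<Longrightarrow> supp \<phi> \<subseteq> S"
  by (auto simp: free_carrier supp_def)

lemma free_carrierI: "finite (supp \<phi>) \<Longrightarrow> supp \<phi> \<subseteq> S \<Longrightarrow> \<phi> \<in> mcarrier (free_smod S)"
  by (auto simp: free_carrier supp_def)

lemma finite_supp_delta: "finite (supp (delta x :: _ \<Rightarrow> 'a::comm_semiring_1))"
  by (rule finite_subset[of _ "{x}"]) (auto simp: supp_def delta_def)

lemma delta_in_free: "x \<in> S \<Longrightarrow> (delta x :: 's \<Rightarrow> 'a::comm_semiring_1) \<in> mcarrier (free_smod S)"
  unfolding free_carrier delta_def
  by (auto intro: finite_subset[of _ "{x}"])

lemma sum_fun_apply: "(\<Sum>i\<in>A. F i) x = (\<Sum>i\<in>A. (F i x :: 'b::comm_monoid_add))"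
  by (induct A rule: infinite_finite_induct) auto

lemma sum_delta_mult: "i < (n::nat) \<Longrightarrow> (\<Sum>i'<n. delta i i' * c i') = (c i :: 'a::comm_semiring_1)"
proof -
  assume i: "i < n"
  have "(\<Sum>i'<n. delta i i' * c i') = (\<Sum>i'<n. (if i = i' then c i' else 0))"
    by (rule sum.cong) (auto simp: delta_def)
  also have "\<dots> = c i" using i by (subst sum.delta') auto
  finally show ?thesis .
qed

lemma sum_smult_delta:
  "(\<Sum>j<(k::nat). (\<lambda>s. c j * delta j s)) = (\<lambda>s. if s < k then c s else (0::'a::comm_semiring_1))"
  by (rule ext) (simp add: sum_fun_apply delta_def if_distrib sum.delta' cong: if_cong)

lemma fin_free_expand:
  assumes "v \<in> mcarrier (free_smod {..<n})"
  shows "(\<Sum>i<n. (\<lambda>s. v i * delta i s)) = (v :: nat \<Rightarrow> 'a::comm_semiring_1)"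
  unfolding sum_smult_delta using assms by (auto simp: free_carrier)

lemma fin_free_hom_expand:
  fixes v :: "nat \<Rightarrow> 'a::comm_semiring_1"
  assumes smM: "semimodule M" and hom: "smod_hom (free_smod {..<n}) M h"
    and v: "v \<in> mcarrier (free_smod {..<n})"
  shows "h v = msum M (\<lambda>i. msmult M (v i) (h (delta i))) {..<n}"
proof -
  have d: "i < n \<Longrightarrow> (delta i :: nat \<Rightarrow> 'a) \<in> mcarrier (free_smod {..<n})" for i
    by (rule delta_in_free) simp
  have expand: "msum (free_smod {..<n}) (\<lambda>i. msmult (free_smod {..<n}) (v i) (delta i)) {..<n} = v"
    using fin_free_expand[OF v] by (subst msum_free) (auto intro: free_smult_closed d)
  have "h v = h (msum (free_smod {..<n}) (\<lambda>i. msmult (free_smod {..<n}) (v i) (delta i)) {..<n})"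
    by (simp only: expand)
  also have "\<dots> = msum M (\<lambda>i. h (msmult (free_smod {..<n}) (v i) (delta i))) {..<n}"
    by (rule smod_hom_msum[OF semimodule_free smM hom]) (auto intro: free_smult_closed d)
  also have "\<dots> = msum M (\<lambda>i. msmult M (v i) (h (delta i))) {..<n}"
    by (rule msum_cong[OF smM refl]) (use hom d smM in \<open>auto simp: smod_hom_def\<close>)
  finally show ?thesis .
qed

lemma fin_free_hom_apply:
  fixes x :: "nat \<Rightarrow> 'a::comm_semiring_1"
  assumes q: "smod_hom (free_smod {..<k}) (free_smod T) q" and x: "x \<in> mcarrier (free_smod {..<k})"
  shows "q x t = (\<Sum>j<k. x j * q (delta j) t)"
proof -
  have qc: "j < k \<Longrightarrow> (\<lambda>s. x j * q (delta j) s) \<in> mcarrier (free_smod T)" for j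
    using q delta_in_free[of j "{..<k}"] by (auto simp: smod_hom_def intro: free_smult_closed)
  have "q x = msum (free_smod T) (\<lambda>j. (\<lambda>s. x j * q (delta j) s)) {..<k}"
    using fin_free_hom_expand[OF semimodule_free q x] by simp
  also have "\<dots> = (\<Sum>j<k. (\<lambda>s. x j * q (delta j) s))"
    by (rule msum_free) (use qc in auto)
  finally show ?thesis by (simp add: sum_fun_apply)
qed

section \<open>Congruences\<close>

definition smod_closed :: "('a::comm_semiring_1, 'm) smod \<Rightarrow> bool" where
  "smod_closed M \<longleftrightarrow> mzero M \<in> mcarrier M \<and>
     (\<forall>x\<in>mcarrier M. \<forall>y\<in>mcarrier M. madd M x y \<in> mcarrier M) \<and>
     (\<forall>a. \<forall>x\<in>mcarrier M. msmult M a x \<in> mcarrier M)"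

lemma semimodule_smod_closed: "semimodule M \<Longrightarrow> smod_closed M"
  unfolding smod_closed_def by simp

lemma smod_closed_free: "smod_closed (free_smod S)"
  using semimodule_free semimodule_smod_closed by blast

lemma smod_congI:
  assumes "E \<subseteq> mcarrier M \<times> mcarrier M"
    and "\<And>x. x \<in> mcarrier M \<Longrightarrow> (x, x) \<in> E"
    and "\<And>x y. (x, y) \<in> E \<Longrightarrow> (y, x) \<in> E"
    and "\<And>x y z. (x, y) \<in> E \<Longrightarrow> (y, z) \<in> E \<Longrightarrow> (x, z) \<in> E"
    and "\<And>x x' y y'. (x, x') \<in> E \<Longrightarrow> (y, y') \<in> E \<Longrightarrow> (madd M x y, madd M x' y') \<in> E"
    and "\<And>a x x'. (x, x') \<in> E \<Longrightarrow> (msmult M a x, msmult M a x') \<in> E"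
  shows "smod_cong M E"
proof -
  have "equiv (mcarrier M) E"
  proof (rule equivI)
    show "refl_on (mcarrier M) E" unfolding refl_on_def using assms(2) by blast
    show "sym E" unfolding sym_def using assms(3) by blast
    show "trans E" unfolding trans_def using assms(4) by blast
  qed (rule assms(1))
  then show ?thesis
    unfolding smod_cong_def using assms(5,6) by fast
qed

lemma smod_cong_equiv: "smod_cong M E \<Longrightarrow> equiv (mcarrier M) E"
  unfolding smod_cong_def by blast

lemma smod_cong_subset: "smod_cong M E \<Longrightarrow> E \<subseteq> mcarrier M \<times> mcarrier M"
  using smod_cong_equiv equiv_type by blast
lemma smod_cong_refl: "smod_cong M E \<Longrightarrow> x \<in> mcarrier M \<Longrightarrow> (x, x) \<in> E"
  using smod_cong_equiv equiv_def refl_onD by metis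
lemma smod_cong_sym: "smod_cong M E \<Longrightarrow> (x, y) \<in> E \<Longrightarrow> (y, x) \<in> E"
  using smod_cong_equiv equiv_def symD by metis
lemma smod_cong_trans: "smod_cong M E \<Longrightarrow> (x, y) \<in> E \<Longrightarrow> (y, z) \<in> E \<Longrightarrow> (x, z) \<in> E"
  using smod_cong_equiv equiv_def transD by metis
lemma smod_cong_add:
  "smod_cong M E \<Longrightarrow> (x, x') \<in> E \<Longrightarrow> (y, y') \<in> E \<Longrightarrow> (madd M x y, madd M x' y') \<in> E"
  unfolding smod_cong_def by fast
lemma smod_cong_smult: "smod_cong M E \<Longrightarrow> (x, x') \<in> E \<Longrightarrow> (msmult M a x, msmult M a x') \<in> E"
  unfolding smod_cong_def by fast

lemma smod_cong_preimage:
  assumes cV: "smod_closed V" and hom: "smod_hom V W t" and E: "smod_cong W E"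
  shows "smod_cong V {(x, y). x \<in> mcarrier V \<and> y \<in> mcarrier V \<and> (t x, t y) \<in> E}"
    (is "smod_cong V ?E")
proof -
  have add: "x \<in> mcarrier V \<Longrightarrow> y \<in> mcarrier V \<Longrightarrow>
      madd V x y \<in> mcarrier V \<and> t (madd V x y) = madd W (t x) (t y)" for x y
    using cV hom by (simp add: smod_closed_def smod_hom_def)
  have smult: "x \<in> mcarrier V \<Longrightarrow> msmult V a x \<in> mcarrier V \<and> t (msmult V a x) = msmult W a (t x)"
    for a x
    using cV hom by (simp add: smod_closed_def smod_hom_def)
  have closed: "x \<in> mcarrier V \<Longrightarrow> t x \<in> mcarrier W" for x
    using hom by (simp add: smod_hom_def)
  show ?thesis
  proof (rule smod_congI)
    fix x x' y y' assume "(x, x') \<in> ?E" "(y, y') \<in> ?E"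
    then show "(madd V x y, madd V x' y') \<in> ?E"
      using add smod_cong_add[OF E] by auto
  next
    fix a x x' assume "(x, x') \<in> ?E"
    then show "(msmult V a x, msmult V a x') \<in> ?E"
      using smult smod_cong_smult[OF E] by auto
  next
    fix x y z assume "(x, y) \<in> ?E" "(y, z) \<in> ?E"
    then show "(x, z) \<in> ?E" using smod_cong_trans[OF E] by blast
  qed (use closed smod_cong_refl[OF E] smod_cong_sym[OF E] in auto)
qed

lemma smod_cong_kernel:
  assumes "smod_closed V" "smod_hom V W t"
  shows "smod_cong V {(x, y). x \<in> mcarrier V \<and> y \<in> mcarrier V \<and> t x = t y}" (is "smod_cong V ?K")
proof (rule smod_congI)
  fix x x' y y' assume "(x, x') \<in> ?K" "(y, y') \<in> ?K"
  then show "(madd V x y, madd V x' y') \<in> ?K"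
    using assms by (simp add: smod_closed_def smod_hom_def)
next
  fix a x x' assume "(x, x') \<in> ?K"
  then show "(msmult V a x, msmult V a x') \<in> ?K"
    using assms by (simp add: smod_closed_def smod_hom_def)
qed auto

lemma smod_cong_full: "smod_closed M \<Longrightarrow> smod_cong M (mcarrier M \<times> mcarrier M)"
  by (rule smod_congI) (auto simp: smod_closed_def)

lemma cong_gen_incl: "R \<subseteq> cong_gen M R"
  unfolding cong_gen_def by blast

lemma cong_gen_least: "smod_cong M E \<Longrightarrow> R \<subseteq> E \<Longrightarrow> cong_gen M R \<subseteq> E"
  unfolding cong_gen_def by blast

lemma cong_gen_memI: "(\<And>E. smod_cong M E \<Longrightarrow> R \<subseteq> E \<Longrightarrow> p \<in> E) \<Longrightarrow> p \<in> cong_gen M R"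
  unfolding cong_gen_def by blast

lemma cong_gen_memD: "p \<in> cong_gen M R \<Longrightarrow> smod_cong M E \<Longrightarrow> R \<subseteq> E \<Longrightarrow> p \<in> E"
  unfolding cong_gen_def by blast

lemma smod_cong_cong_gen:
  assumes "smod_closed M" "R \<subseteq> mcarrier M \<times> mcarrier M"
  shows "smod_cong M (cong_gen M R)"
proof (rule smod_congI)
  show "cong_gen M R \<subseteq> mcarrier M \<times> mcarrier M"
    using cong_gen_least[OF smod_cong_full[OF assms(1)] assms(2)] .
next
  fix x assume "x \<in> mcarrier M" then show "(x, x) \<in> cong_gen M R"
    by (intro cong_gen_memI) (rule smod_cong_refl)
next
  fix x y assume "(x, y) \<in> cong_gen M R" then show "(y, x) \<in> cong_gen M R"
    by (intro cong_gen_memI) (rule smod_cong_sym, assumption, rule cong_gen_memD)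
next
  fix x y z assume "(x, y) \<in> cong_gen M R" "(y, z) \<in> cong_gen M R"
  then show "(x, z) \<in> cong_gen M R"
    by (intro cong_gen_memI) (metis cong_gen_memD smod_cong_trans)
next
  fix x x' y y' assume "(x, x') \<in> cong_gen M R" "(y, y') \<in> cong_gen M R"
  then show "(madd M x y, madd M x' y') \<in> cong_gen M R"
    by (intro cong_gen_memI) (metis cong_gen_memD smod_cong_add)
next
  fix a x x' assume "(x, x') \<in> cong_gen M R"
  then show "(msmult M a x, msmult M a x') \<in> cong_gen M R"
    by (intro cong_gen_memI) (metis cong_gen_memD smod_cong_smult)
qed

lemma smod_hom_cong_gen_eq:
  assumes "smod_closed V" "smod_hom V W t" "\<And>x y. (x, y) \<in> R \<Longrightarrow> x \<in> mcarrier V \<and> y \<in> mcarrier V \<and> t x = t y"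
    and "(x, y) \<in> cong_gen V R"
  shows "t x = t y"
  using cong_gen_least[OF smod_cong_kernel[OF assms(1,2)], of R] assms(3,4) by blast

section \<open>Tensor products\<close>

lemma push_eq:
  assumes "finite D" "{n. \<phi> (n, m) \<noteq> 0} \<subseteq> D"
  shows "push f \<phi> (n', m) = (\<Sum>n\<in>{n\<in>D. f n = n'}. \<phi> (n, m))"
  unfolding push_def prod.case
  by (rule sum.mono_neutral_left) (use assms in auto)

lemma supp_slice_finite:
  "finite (supp \<phi>) \<Longrightarrow> finite {n. \<phi> (n, m) \<noteq> 0}"
proof -
  assume f: "finite (supp \<phi>)"
  have "{n. \<phi> (n, m) \<noteq> 0} \<subseteq> fst ` supp \<phi>" by (force simp: supp_def)
  then show ?thesis using f finite_subset by blast
qed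

lemma push_add:
  assumes "finite (supp \<phi>)" "finite (supp \<psi>)"
  shows "push f (\<phi> + \<psi>) = push f \<phi> + push f \<psi>"
proof (rule ext, clarify)
  fix n' m
  let ?D = "{n. \<phi> (n, m) \<noteq> 0} \<union> {n. \<psi> (n, m) \<noteq> 0}"
  have fD: "finite ?D" using assms by (simp add: supp_slice_finite)
  have "push f (\<phi> + \<psi>) (n', m) = (\<Sum>n\<in>{n\<in>?D. f n = n'}. (\<phi> + \<psi>) (n, m))"
    by (rule push_eq) (use fD in auto)
  also have "\<dots> = (\<Sum>n\<in>{n\<in>?D. f n = n'}. \<phi> (n, m)) + (\<Sum>n\<in>{n\<in>?D. f n = n'}. \<psi> (n, m))"
    by (simp add: sum.distrib)
  also have "\<dots> = push f \<phi> (n', m) + push f \<psi> (n', m)"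
  proof -
    have e1: "push f \<phi> (n', m) = (\<Sum>n\<in>{n\<in>?D. f n = n'}. \<phi> (n, m))"
      by (rule push_eq) (use fD in auto)
    have e2: "push f \<psi> (n', m) = (\<Sum>n\<in>{n\<in>?D. f n = n'}. \<psi> (n, m))"
      by (rule push_eq) (use fD in auto)
    show ?thesis by (simp only: e1 e2)
  qed
  finally show "push f (\<phi> + \<psi>) (n', m) = (push f \<phi> + push f \<psi>) (n', m)" by simp
qed

lemma push_smult:
  assumes "finite (supp \<phi>)"
  shows "push f (\<lambda>s. a * \<phi> s) = (\<lambda>s. a * push f \<phi> s)"
proof (rule ext, clarify)
  fix n' m
  let ?D = "{n. \<phi> (n, m) \<noteq> 0}"
  have fD: "finite ?D" using assms by (simp add: supp_slice_finite)
  have "push f (\<lambda>s. a * \<phi> s) (n', m) = (\<Sum>n\<in>{n\<in>?D. f n = n'}. a * \<phi> (n, m))"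
    by (rule push_eq) (use fD in auto)
  also have "\<dots> = a * push f \<phi> (n', m)"
    by (subst push_eq[where D = ?D]) (use fD in \<open>auto simp: sum_distrib_left\<close>)
  finally show "push f (\<lambda>s. a * \<phi> s) (n', m) = a * push f \<phi> (n', m)" .
qed

lemma push_zero: "push f 0 = 0" "push f (\<lambda>_. 0) = (\<lambda>_. 0)"
  by (auto simp: push_def fun_eq_iff)

lemma push_delta: "push f (delta (n, m)) = (delta (f n, m) :: _ \<Rightarrow> 'a::comm_semiring_1)"
proof (rule ext, clarify)
  fix n' m'
  show "push f (delta (n, m)) (n', m') = (delta (f n, m) :: _ \<Rightarrow> 'a) (n', m')"
  proof (cases "m' = m \<and> f n = n'")
    case True
    then have "{n0. f n0 = n' \<and> (delta (n, m) :: _ \<Rightarrow> 'a) (n0, m') \<noteq> 0} = {n}"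
      by (auto simp: delta_def)
    then show ?thesis using True by (simp add: push_def delta_def)
  next
    case False
    then have "{n0. f n0 = n' \<and> (delta (n, m) :: _ \<Rightarrow> 'a) (n0, m') \<noteq> 0} = {}"
      by (auto simp: delta_def)
    then show ?thesis using False by (auto simp: push_def delta_def)
  qed
qed

lemma push_id: "push id \<phi> = \<phi>"
proof (rule ext, clarify)
  fix n' m
  show "push id \<phi> (n', m) = \<phi> (n', m)"
  proof (cases "\<phi> (n', m) = 0")
    case True
    then have "{n. id n = n' \<and> \<phi> (n, m) \<noteq> 0} = {}" by auto
    then show ?thesis using True by (simp add: push_def)
  next
    case False
    then have "{n. id n = n' \<and> \<phi> (n, m) \<noteq> 0} = {n'}" by auto
    then show ?thesis by (simp add: push_def)
  qed
qed

lemma push_carrier: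
  assumes "\<phi> \<in> mcarrier (free_smod (A \<times> B))" "\<And>n. n \<in> A \<Longrightarrow> f n \<in> A'"
  shows "push f \<phi> \<in> mcarrier (free_smod (A' \<times> B))"
proof (rule free_carrierI)
  have sub: "supp (push f \<phi>) \<subseteq> (\<lambda>(n, m). (f n, m)) ` supp \<phi>"
  proof
    fix p assume p: "p \<in> supp (push f \<phi>)"
    obtain n' m where pe: "p = (n', m)" by force
    with p have "push f \<phi> (n', m) \<noteq> 0" by (simp add: supp_def)
    have "{n. f n = n' \<and> \<phi> (n, m) \<noteq> 0} \<noteq> {}"
    proof
      assume "{n. f n = n' \<and> \<phi> (n, m) \<noteq> 0} = {}"
      then have "push f \<phi> (n', m) = 0" unfolding push_def prod.case by (metis sum.empty)
      with \<open>push f \<phi> (n', m) \<noteq> 0\<close> show False by simp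
    qed
    then obtain n where "f n = n'" "\<phi> (n, m) \<noteq> 0" by blast
    then show "p \<in> (\<lambda>(n, m). (f n, m)) ` supp \<phi>" using pe by (force simp: supp_def)
  qed
  have sub2: "(\<lambda>(n, m). (f n, m)) ` supp \<phi> \<subseteq> A' \<times> B"
    using free_supp_subset[OF assms(1)] assms(2) by auto
  show "finite (supp (push f \<phi>))"
    by (rule finite_subset[OF sub]) (use free_finite_supp[OF assms(1)] in simp)
  show "supp (push f \<phi>) \<subseteq> A' \<times> B" using sub sub2 by (rule order_trans)
qed

lemma push_sum:
  assumes "\<And>i. i \<in> I \<Longrightarrow> \<phi> i \<in> mcarrier (free_smod S)"
  shows "push f (\<Sum>i\<in>I. \<phi> i) = (\<Sum>i\<in>I. push f (\<phi> i))"
  using assms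
proof (induct I rule: infinite_finite_induct)
  case (infinite A) then show ?case by (simp add: push_zero)
next
  case empty then show ?case by (simp add: push_zero)
next
  case (insert x F)
  have "finite (supp (\<phi> x))" using insert free_finite_supp by blast
  moreover have "finite (supp (\<Sum>i\<in>F. \<phi> i))"
    using insert free_finite_supp free_sum_closed by (metis insertCI)
  ultimately have "push f (\<phi> x + (\<Sum>i\<in>F. \<phi> i)) = push f (\<phi> x) + push f (\<Sum>i\<in>F. \<phi> i)"
    by (rule push_add)
  moreover have IH: "push f (\<Sum>i\<in>F. \<phi> i) = (\<Sum>i\<in>F. push f (\<phi> i))" using insert by blast
  ultimately show ?case by (simp only: sum.insert[OF insert(1,2)])
qed

lemma push_hom:
  assumes "\<And>n. n \<in> A \<Longrightarrow> f n \<in> A'"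
  shows "smod_hom (free_smod (A \<times> B)) (free_smod (A' \<times> B)) (push f)"
  using assms unfolding smod_hom_def
  by (auto simp: push_carrier free_add_closed push_add push_smult push_zero free_finite_supp)

lemma tensor_rel_subset_tensor_cong: "tensor_rel N M \<subseteq> tensor_cong N M"
  unfolding tensor_cong_def by (rule cong_gen_incl)

lemma tensor_cong_least:
  "smod_cong (free_smod (mcarrier N \<times> mcarrier M)) E \<Longrightarrow> tensor_rel N M \<subseteq> E \<Longrightarrow> tensor_cong N M \<subseteq> E"
  unfolding tensor_cong_def by (rule cong_gen_least)

context
  fixes N :: "('a::comm_semiring_1, 'n) smod" and M :: "('a, 'm) smod"
  assumes cN: "smod_closed N" and cM: "smod_closed M"
begin

lemma tensor_rel_subset:
  "tensor_rel N M \<subseteq>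
     mcarrier (free_smod (mcarrier N \<times> mcarrier M)) \<times> mcarrier (free_smod (mcarrier N \<times> mcarrier M))"
proof -
  have d: "n \<in> mcarrier N \<Longrightarrow> m \<in> mcarrier M \<Longrightarrow>
      (delta (n, m) :: _ \<Rightarrow> 'a) \<in> mcarrier (free_smod (mcarrier N \<times> mcarrier M))" for n m
    by (rule delta_in_free) simp
  show ?thesis
    using cN cM unfolding tensor_rel_def Let_def smod_closed_def
    by (auto intro!: d free_add_closed free_smult_closed)
qed

lemma smod_cong_tensor_cong: "smod_cong (free_smod (mcarrier N \<times> mcarrier M)) (tensor_cong N M)"
  unfolding tensor_cong_def by (rule smod_cong_cong_gen[OF smod_closed_free tensor_rel_subset])

lemma tensor_cong_carrier:
  "(x, y) \<in> tensor_cong N M \<Longrightarrow>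
     x \<in> mcarrier (free_smod (mcarrier N \<times> mcarrier M)) \<and> y \<in> mcarrier (free_smod (mcarrier N \<times> mcarrier M))"
  using smod_cong_subset[OF smod_cong_tensor_cong] by blast

lemma tensor_cong_refl: "x \<in> mcarrier (free_smod (mcarrier N \<times> mcarrier M)) \<Longrightarrow> (x, x) \<in> tensor_cong N M"
  using smod_cong_refl[OF smod_cong_tensor_cong] by blast

lemma tensor_cong_sym: "(x, y) \<in> tensor_cong N M \<Longrightarrow> (y, x) \<in> tensor_cong N M"
  using smod_cong_sym[OF smod_cong_tensor_cong] by blast

lemma tensor_cong_trans:
  "(x, y) \<in> tensor_cong N M \<Longrightarrow> (y, z) \<in> tensor_cong N M \<Longrightarrow> (x, z) \<in> tensor_cong N M"
  using smod_cong_trans[OF smod_cong_tensor_cong] by blast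

lemma tensor_cong_add:
  "(x, x') \<in> tensor_cong N M \<Longrightarrow> (y, y') \<in> tensor_cong N M \<Longrightarrow> (x + y, x' + y') \<in> tensor_cong N M"
  using smod_cong_add[OF smod_cong_tensor_cong, of x x' y y'] by simp

lemma tensor_cong_sum:
  assumes "\<And>i. i \<in> I \<Longrightarrow> (\<phi> i, \<phi>' i) \<in> tensor_cong N M"
  shows "((\<Sum>i\<in>I. \<phi> i), (\<Sum>i\<in>I. \<phi>' i)) \<in> tensor_cong N M"
  using assms
proof (induct I rule: infinite_finite_induct)
  case (infinite A)
  then have "sum \<phi> A = 0" "sum \<phi>' A = 0" by simp_all
  then show ?case using tensor_cong_refl[OF free_zero_closed] by (simp only:)
next
  case empty then show ?case using tensor_cong_refl[OF free_zero_closed] by (simp only: sum.empty)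
next
  case (insert x F)
  have "(\<phi> x + sum \<phi> F, \<phi>' x + sum \<phi>' F) \<in> tensor_cong N M"
    by (rule tensor_cong_add) (use insert in auto)
  then show ?case by (simp only: sum.insert[OF insert(1,2)])
qed

lemma tensor_cong_add_left:
  "n \<in> mcarrier N \<Longrightarrow> n' \<in> mcarrier N \<Longrightarrow> m \<in> mcarrier M \<Longrightarrow>
   (delta (madd N n n', m), delta (n, m) + delta (n', m)) \<in> tensor_cong N M"
  by (rule subsetD[OF tensor_rel_subset_tensor_cong]) (unfold tensor_rel_def Let_def free_simps, blast)

lemma tensor_cong_add_right:
  "n \<in> mcarrier N \<Longrightarrow> m \<in> mcarrier M \<Longrightarrow> m' \<in> mcarrier M \<Longrightarrow>
   (delta (n, madd M m m'), delta (n, m) + delta (n, m')) \<in> tensor_cong N M"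
  by (rule subsetD[OF tensor_rel_subset_tensor_cong]) (unfold tensor_rel_def Let_def free_simps, blast)

lemma tensor_cong_smult_left:
  "n \<in> mcarrier N \<Longrightarrow> m \<in> mcarrier M \<Longrightarrow>
   (delta (msmult N a n, m), (\<lambda>s. a * delta (n, m) s)) \<in> tensor_cong N M"
  by (rule subsetD[OF tensor_rel_subset_tensor_cong]) (unfold tensor_rel_def Let_def free_simps, blast)

lemma tensor_cong_smult_right:
  "n \<in> mcarrier N \<Longrightarrow> m \<in> mcarrier M \<Longrightarrow>
   (delta (n, msmult M a m), (\<lambda>s. a * delta (n, m) s)) \<in> tensor_cong N M"
  by (rule subsetD[OF tensor_rel_subset_tensor_cong]) (unfold tensor_rel_def Let_def free_simps, blast)

end

lemma tensor_cong_zero_left: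
  fixes N :: "('a::comm_semiring_1, 'n) smod" and M :: "('a, 'm) smod"
  assumes "semimodule N" "smod_closed M" "m \<in> mcarrier M"
  shows "(delta (mzero N, m), 0) \<in> tensor_cong N M"
proof -
  have "(delta (msmult N 0 (mzero N), m), (\<lambda>s. (0::'a) * delta (mzero N, m) s)) \<in> tensor_cong N M"
    by (rule tensor_cong_smult_left[OF semimodule_smod_closed[OF assms(1)] assms(2) smod_zero_closed[OF assms(1)] assms(3)])
  then show ?thesis using assms(1) by (simp add: zero_fun_def)
qed

lemma tensor_cong_zero_right:
  assumes "smod_closed N" "semimodule M" "n \<in> mcarrier N"
  shows "(delta (n, mzero M), 0) \<in> tensor_cong N M"
proof -
  have "(delta (n, msmult M 0 (mzero M)), (\<lambda>s. 0 * delta (n, mzero M) s)) \<in> tensor_cong N M"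
    by (rule tensor_cong_smult_right[OF assms(1) semimodule_smod_closed[OF assms(2)] assms(3) smod_zero_closed[OF assms(2)]])
  then show ?thesis using assms(2) by (simp add: zero_fun_def)
qed

lemma tensor_cong_msum_left:
  assumes smN: "semimodule N" and cM: "smod_closed M" and J: "finite J"
    and w: "\<And>j. j \<in> J \<Longrightarrow> w j \<in> mcarrier N" and x: "x \<in> mcarrier M"
  shows "(delta (msum N (\<lambda>j. msmult N (c j) (w j)) J, x),
          \<Sum>j\<in>J. delta (w j, msmult M (c j) x)) \<in> tensor_cong N M"
  using J w
proof (induct J rule: finite_induct)
  case empty
  show ?case using tensor_cong_zero_left[OF smN cM x] by (simp only: msum_empty[OF smN] sum.empty)
next
  case (insert j J)
  note cN = semimodule_smod_closed[OF smN]
  have wj: "w j \<in> mcarrier N" using insert by auto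
  have cw: "msmult N (c j) (w j) \<in> mcarrier N" using wj smN by simp
  have ms: "msum N (\<lambda>j. msmult N (c j) (w j)) J \<in> mcarrier N" using insert smN by simp
  have e: "msum N (\<lambda>j. msmult N (c j) (w j)) (insert j J) =
     madd N (msmult N (c j) (w j)) (msum N (\<lambda>j. msmult N (c j) (w j)) J)"
    by (rule msum_insert[OF smN insert(1,2)]) (use insert smN in auto)
  have t1: "(delta (madd N (msmult N (c j) (w j)) (msum N (\<lambda>j. msmult N (c j) (w j)) J), x),
      delta (msmult N (c j) (w j), x) + delta (msum N (\<lambda>j. msmult N (c j) (w j)) J, x)) \<in> tensor_cong N M"
    by (rule tensor_cong_add_left[OF cN cM cw ms x])
  have t3: "(delta (msmult N (c j) (w j), x), delta (w j, msmult M (c j) x)) \<in> tensor_cong N M"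
    by (rule tensor_cong_trans[OF cN cM tensor_cong_smult_left[OF cN cM wj x] tensor_cong_sym[OF cN cM tensor_cong_smult_right[OF cN cM wj x]]])
  have ih: "(delta (msum N (\<lambda>j. msmult N (c j) (w j)) J, x), \<Sum>j\<in>J. delta (w j, msmult M (c j) x)) \<in> tensor_cong N M"
    using insert by auto
  have "(delta (msum N (\<lambda>j. msmult N (c j) (w j)) (insert j J), x),
      delta (w j, msmult M (c j) x) + (\<Sum>j\<in>J. delta (w j, msmult M (c j) x))) \<in> tensor_cong N M"
    unfolding e by (rule tensor_cong_trans[OF cN cM t1 tensor_cong_add[OF cN cM t3 ih]])
  then show ?case by (simp only: sum.insert[OF insert(1,2)])
qed

lemma tensor_cong_msum_right:
  assumes cN: "smod_closed N" and smM: "semimodule M" and I: "finite I"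
    and x: "\<And>i. i \<in> I \<Longrightarrow> x i \<in> mcarrier M" and w: "w \<in> mcarrier N"
  shows "((\<Sum>i\<in>I. delta (w, x i)), delta (w, msum M x I)) \<in> tensor_cong N M"
  using I x
proof (induct I rule: finite_induct)
  case empty
  show ?case using tensor_cong_sym[OF cN semimodule_smod_closed[OF smM] tensor_cong_zero_right[OF cN smM w]]
    by (simp only: msum_empty[OF smM] sum.empty)
next
  case (insert i I)
  note cM = semimodule_smod_closed[OF smM]
  have xi: "x i \<in> mcarrier M" using insert by auto
  have ms: "msum M x I \<in> mcarrier M" using insert smM by simp
  have e: "msum M x (insert i I) = madd M (x i) (msum M x I)"
    by (rule msum_insert[OF smM insert(1,2)]) (use insert in auto)
  have ih: "((\<Sum>i\<in>I. delta (w, x i)), delta (w, msum M x I)) \<in> tensor_cong N M"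
    using insert by auto
  have "(delta (w, x i) + (\<Sum>i\<in>I. delta (w, x i)), delta (w, msum M x (insert i I))) \<in> tensor_cong N M"
    unfolding e by (rule tensor_cong_trans[OF cN cM tensor_cong_add[OF cN cM tensor_cong_refl[OF cN cM] ih] tensor_cong_sym[OF cN cM tensor_cong_add_right[OF cN cM w xi ms]]])
      (rule delta_in_free, use w xi in simp)
  then show ?case by (simp only: sum.insert[OF insert(1,2)])
qed

lemma tensor_relE:
  assumes "(\<phi>, \<phi>') \<in> tensor_rel N M"
  obtains
    (add_left) n n' m where "n \<in> mcarrier N" "n' \<in> mcarrier N" "m \<in> mcarrier M"
      "\<phi> = delta (madd N n n', m)" "\<phi>' = delta (n, m) + delta (n', m)"
  | (add_right) n m m' where "n \<in> mcarrier N" "m \<in> mcarrier M" "m' \<in> mcarrier M"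
      "\<phi> = delta (n, madd M m m')" "\<phi>' = delta (n, m) + delta (n, m')"
  | (smult_left) a n m where "n \<in> mcarrier N" "m \<in> mcarrier M"
      "\<phi> = delta (msmult N a n, m)" "\<phi>' = (\<lambda>s. a * delta (n, m) s)"
  | (smult_right) a n m where "n \<in> mcarrier N" "m \<in> mcarrier M"
      "\<phi> = delta (n, msmult M a m)" "\<phi>' = (\<lambda>s. a * delta (n, m) s)"
  using assms unfolding tensor_rel_def Let_def free_simps by blast

lemma push_tensor_rel:
  assumes hom: "smod_hom N N' f" and rel: "(\<phi>, \<phi>') \<in> tensor_rel N M"
  shows "(push f \<phi>, push f \<phi>') \<in> tensor_rel N' M"
proof -
  have fN: "n \<in> mcarrier N \<Longrightarrow> f n \<in> mcarrier N'" for n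
    using hom by (simp add: smod_hom_def)
  have fadd: "n \<in> mcarrier N \<Longrightarrow> n' \<in> mcarrier N \<Longrightarrow> f (madd N n n') = madd N' (f n) (f n')" for n n'
    using hom by (simp add: smod_hom_def)
  have fsm: "n \<in> mcarrier N \<Longrightarrow> f (msmult N a n) = msmult N' a (f n)" for a n
    using hom by (simp add: smod_hom_def)
  note push_simps = push_add push_smult finite_supp_delta push_delta
  from rel show ?thesis
  proof (cases rule: tensor_relE)
    case add_left then show ?thesis
      unfolding tensor_rel_def Let_def free_simps by (simp add: push_simps fadd) (blast intro: fN)
  next
    case add_right then show ?thesis
      unfolding tensor_rel_def Let_def free_simps by (simp add: push_simps) (blast intro: fN)
  next
    case smult_left then show ?thesis
      unfolding tensor_rel_def Let_def free_simps by (simp add: push_simps fsm) (blast intro: fN)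
  next
    case smult_right then show ?thesis
      unfolding tensor_rel_def Let_def free_simps by (simp add: push_simps) (blast intro: fN)
  qed
qed

lemma push_tensor_cong:
  fixes N :: "('a::comm_semiring_1, 'n) smod" and N' :: "('a, 'n') smod" and M :: "('a, 'm) smod"
  assumes cN: "smod_closed N" and cN': "smod_closed N'" and cM: "smod_closed M"
    and hom: "smod_hom N N' f" and rel: "(\<phi>, \<phi>') \<in> tensor_cong N M"
  shows "(push f \<phi>, push f \<phi>') \<in> tensor_cong N' M"
proof -
  let ?C = "mcarrier (free_smod (mcarrier N \<times> mcarrier M)) :: ('n \<times> 'm \<Rightarrow> 'a) set"
  let ?K = "{(\<phi>, \<phi>'). \<phi> \<in> ?C \<and> \<phi>' \<in> ?C \<and> (push f \<phi>, push f \<phi>') \<in> tensor_cong N' M}"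
  have "smod_hom (free_smod (mcarrier N \<times> mcarrier M)) (free_smod (mcarrier N' \<times> mcarrier M)) (push f)"
    by (rule push_hom) (use hom in \<open>simp add: smod_hom_def\<close>)
  then have "smod_cong (free_smod (mcarrier N \<times> mcarrier M)) ?K"
    by (rule smod_cong_preimage[OF smod_closed_free _ smod_cong_tensor_cong[OF cN' cM]])
  moreover have "tensor_rel N M \<subseteq> ?K"
    using tensor_rel_subset[OF cN cM] push_tensor_rel[OF hom]
      subsetD[OF tensor_rel_subset_tensor_cong[of N' M]] by blast
  ultimately show ?thesis using tensor_cong_least rel by blast
qed

section \<open>Contraction with a linear functional\<close>

definition contract :: "('a::comm_semiring_1, 'm) smod \<Rightarrow> ('n \<Rightarrow> 'a) \<Rightarrow> ('n \<times> 'm \<Rightarrow> 'a) \<Rightarrow> 'm" where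
  "contract M lam \<phi> = msum M (\<lambda>p. msmult M (\<phi> p * lam (fst p)) (snd p)) (supp \<phi>)"

context
  fixes M :: "('a::comm_semiring_1, 'm) smod" and lam :: "'n \<Rightarrow> 'a"
  assumes smM: "semimodule M"
begin

lemma contract_eq_msum:
  assumes "finite D" "supp \<phi> \<subseteq> D" "snd ` D \<subseteq> mcarrier M"
  shows "contract M lam \<phi> = msum M (\<lambda>p. msmult M (\<phi> p * lam (fst p)) (snd p)) D"
  unfolding contract_def
  by (rule msum_neutral[OF smM assms(1,2)]) (use assms(3) smM in \<open>auto simp: supp_def\<close>)

lemma contract_add:
  assumes "\<phi> \<in> mcarrier (free_smod (X \<times> mcarrier M))" "\<psi> \<in> mcarrier (free_smod (X \<times> mcarrier M))"
  shows "contract M lam (\<phi> + \<psi>) = madd M (contract M lam \<phi>) (contract M lam \<psi>)"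
proof -
  let ?t = "\<lambda>\<phi> p. msmult M (\<phi> p * lam (fst p)) (snd p)"
  let ?D = "supp \<phi> \<union> supp \<psi>"
  have fD: "finite ?D" using assms free_finite_supp by blast
  have sD: "snd ` ?D \<subseteq> mcarrier M" using assms free_supp_subset by fastforce
  have "supp (\<phi> + \<psi>) \<subseteq> ?D" by (auto simp: supp_def)
  then have "contract M lam (\<phi> + \<psi>) = msum M (?t (\<phi> + \<psi>)) ?D"
    by (intro contract_eq_msum fD sD)
  also have "\<dots> = msum M (\<lambda>p. madd M (?t \<phi> p) (?t \<psi> p)) ?D"
    by (rule msum_cong[OF smM refl]) (use sD smM in \<open>auto simp: distrib_right smod_smult_add_left\<close>)
  also have "\<dots> = madd M (msum M (?t \<phi>) ?D) (msum M (?t \<psi>) ?D)"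
    by (rule msum_add[OF smM]) (use sD smM in auto)
  also have "\<dots> = madd M (contract M lam \<phi>) (contract M lam \<psi>)"
    by (subst (1 2) contract_eq_msum[OF fD _ sD]) auto
  finally show ?thesis .
qed

lemma contract_smult:
  assumes "\<phi> \<in> mcarrier (free_smod (X \<times> mcarrier M))"
  shows "contract M lam (\<lambda>s. a * \<phi> s) = msmult M a (contract M lam \<phi>)"
proof -
  let ?t = "\<lambda>\<phi> p. msmult M (\<phi> p * lam (fst p)) (snd p)"
  have fD: "finite (supp \<phi>)" using assms free_finite_supp by blast
  have sD: "snd ` supp \<phi> \<subseteq> mcarrier M" using assms free_supp_subset by fastforce
  have "supp (\<lambda>s. a * \<phi> s) \<subseteq> supp \<phi>" by (auto simp: supp_def)
  then have "contract M lam (\<lambda>s. a * \<phi> s) = msum M (?t (\<lambda>s. a * \<phi> s)) (supp \<phi>)"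
    by (intro contract_eq_msum fD sD)
  also have "\<dots> = msum M (\<lambda>p. msmult M a (?t \<phi> p)) (supp \<phi>)"
    by (rule msum_cong[OF smM refl]) (use sD smM in \<open>auto simp: mult.assoc smod_smult_mult\<close>)
  also have "\<dots> = msmult M a (contract M lam \<phi>)"
    unfolding contract_def by (rule msum_smult[OF smM, symmetric]) (use sD smM in auto)
  finally show ?thesis .
qed

lemma smod_hom_contract: "smod_hom (free_smod (X \<times> mcarrier M)) M (contract M lam)"
proof -
  have "contract M lam \<phi> \<in> mcarrier M" if "\<phi> \<in> mcarrier (free_smod (X \<times> mcarrier M))" for \<phi>
    using free_supp_subset[OF that] smM unfolding contract_def by (auto intro!: msum_closed)
  moreover have "contract M lam 0 = mzero M"
    by (simp add: contract_def supp_def smM)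
  ultimately show ?thesis
    unfolding smod_hom_def by (simp add: contract_add contract_smult)
qed

lemma contract_delta:
  assumes "m \<in> mcarrier M"
  shows "contract M lam (delta (n, m)) = msmult M (lam n) m"
proof -
  have "supp (delta (n, m) :: _ \<Rightarrow> 'a) = {(n, m)}" by (auto simp: supp_def delta_def)
  then show ?thesis
    unfolding contract_def using msum_insert[OF smM, of "{}" "(n, m)"] assms smM
    by (simp add: delta_def)
qed

end

lemma contract_tensor_rel:
  fixes N :: "('a::comm_semiring_1, 'n) smod" and M :: "('a, 'm) smod"
  assumes cN: "smod_closed N" and smM: "semimodule M"
    and lam_add: "\<And>x y. x \<in> mcarrier N \<Longrightarrow> y \<in> mcarrier N \<Longrightarrow> lam (madd N x y) = lam x + lam y"
    and lam_smult: "\<And>a x. x \<in> mcarrier N \<Longrightarrow> lam (msmult N a x) = a * lam x"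
    and rel: "(x, y) \<in> tensor_rel N M"
  shows "contract M lam x = contract M lam y"
proof -
  have dc: "n \<in> mcarrier N \<Longrightarrow> m \<in> mcarrier M \<Longrightarrow>
      (delta (n, m) :: _ \<Rightarrow> 'a) \<in> mcarrier (free_smod (mcarrier N \<times> mcarrier M))" for n m
    by (rule delta_in_free) simp
  note add = contract_add[OF smM, where X = "mcarrier N"]
    and smult = contract_smult[OF smM, where X = "mcarrier N"] and delta = contract_delta[OF smM]
  note closed = cN[unfolded smod_closed_def]
  from rel show ?thesis
  proof (cases rule: tensor_relE)
    case (add_left n n' m)
    then have "contract M lam x = msmult M (lam n + lam n') m"
      using closed by (simp add: delta lam_add)
    also have "\<dots> = contract M lam y"
      using add_left dc by (simp add: add delta smod_smult_add_left[OF smM])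
    finally show ?thesis .
  next
    case (add_right n m m')
    then show ?thesis
      using dc smM by (simp add: add delta smod_smult_add_right)
  next
    case (smult_left a n m)
    then have "contract M lam x = msmult M (a * lam n) m"
      using closed by (simp add: delta lam_smult)
    also have "\<dots> = contract M lam y"
      using smult_left dc by (simp add: smult delta smod_smult_mult[OF smM])
    finally show ?thesis .
  next
    case (smult_right a n m)
    then show ?thesis
      using dc smM by (simp add: smult delta smod_smult_mult[symmetric] mult.commute)
  qed
qed

lemma contract_tensor_cong:
  fixes N :: "('a::comm_semiring_1, 'n) smod" and M :: "('a, 'm) smod"
  assumes cN: "smod_closed N" and smM: "semimodule M"
    and lam_add: "\<And>x y. x \<in> mcarrier N \<Longrightarrow> y \<in> mcarrier N \<Longrightarrow> lam (madd N x y) = lam x + lam y"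
    and lam_smult: "\<And>a x. x \<in> mcarrier N \<Longrightarrow> lam (msmult N a x) = a * lam x"
    and rel: "(\<phi>, \<phi>') \<in> tensor_cong N M"
  shows "contract M lam \<phi> = contract M lam \<phi>'"
proof (rule smod_hom_cong_gen_eq[OF smod_closed_free smod_hom_contract[OF smM]])
  show "(\<phi>, \<phi>') \<in> cong_gen (free_smod (mcarrier N \<times> mcarrier M)) (tensor_rel N M)"
    using rel unfolding tensor_cong_def .
  show "x \<in> mcarrier (free_smod (mcarrier N \<times> mcarrier M)) \<and>
      y \<in> mcarrier (free_smod (mcarrier N \<times> mcarrier M)) \<and> contract M lam x = contract M lam y"
    if "(x, y) \<in> tensor_rel N M" for x y
    using that tensor_rel_subset[OF cN semimodule_smod_closed[OF smM]]
      contract_tensor_rel[OF cN smM lam_add lam_smult that] by blast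
qed

section \<open>Projectivity from a dual basis\<close>

definition descend :: "('a, 'v) smod \<Rightarrow> ('v \<Rightarrow> 'm) \<Rightarrow> ('v \<Rightarrow> 'w) \<Rightarrow> 'm \<Rightarrow> 'w" where
  "descend V h t y = t (SOME v. v \<in> mcarrier V \<and> h v = y)"

lemma descend_apply:
  assumes "v \<in> mcarrier V"
    and compat: "\<And>v v'. v \<in> mcarrier V \<Longrightarrow> v' \<in> mcarrier V \<Longrightarrow> h v = h v' \<Longrightarrow> t v = t v'"
  shows "descend V h t (h v) = t v"
proof -
  have "\<exists>v0. v0 \<in> mcarrier V \<and> h v0 = h v" using assms(1) by blast
  then have "(SOME v0. v0 \<in> mcarrier V \<and> h v0 = h v) \<in> mcarrier V \<and>
      h (SOME v0. v0 \<in> mcarrier V \<and> h v0 = h v) = h v"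
    by (rule someI_ex)
  then show ?thesis unfolding descend_def using compat assms(1) by blast
qed

lemma smod_hom_descend:
  assumes cV: "smod_closed V" and h: "smod_hom V M h" and onto: "h ` mcarrier V = mcarrier M"
    and t: "smod_hom V W t"
    and compat: "\<And>v v'. v \<in> mcarrier V \<Longrightarrow> v' \<in> mcarrier V \<Longrightarrow> h v = h v' \<Longrightarrow> t v = t v'"
  shows "smod_hom M W (descend V h t)"
proof -
  have d: "descend V h t (h v) = t v" if "v \<in> mcarrier V" for v
    using that compat by (rule descend_apply)
  have lift: "\<exists>v\<in>mcarrier V. y = h v" if "y \<in> mcarrier M" for y
    using that onto by blast
  have V: "mzero V \<in> mcarrier V" "\<And>v v'. v \<in> mcarrier V \<Longrightarrow> v' \<in> mcarrier V \<Longrightarrow> madd V v v' \<in> mcarrier V"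
    "\<And>a v. v \<in> mcarrier V \<Longrightarrow> msmult V a v \<in> mcarrier V"
    using cV by (simp_all add: smod_closed_def)
  note hh = h[unfolded smod_hom_def] and tt = t[unfolded smod_hom_def]
  show ?thesis
    unfolding smod_hom_def
  proof (intro conjI ballI allI)
    fix y assume "y \<in> mcarrier M"
    then obtain v where "v \<in> mcarrier V" "y = h v" using lift by blast
    then show "descend V h t y \<in> mcarrier W" using d tt by simp
  next
    fix y y' assume "y \<in> mcarrier M" "y' \<in> mcarrier M"
    then obtain v v' where v: "v \<in> mcarrier V" "y = h v" "v' \<in> mcarrier V" "y' = h v'"
      using lift by blast
    then have "madd M y y' = h (madd V v v')" using hh by simp
    then show "descend V h t (madd M y y') = madd W (descend V h t y) (descend V h t y')"
      using d v tt V by simp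
  next
    show "descend V h t (mzero M) = mzero W" using d[OF V(1)] hh tt by simp
  next
    fix a y assume "y \<in> mcarrier M"
    then obtain v where v: "v \<in> mcarrier V" "y = h v" using lift by blast
    then have "msmult M a y = h (msmult V a v)" using hh by simp
    then show "descend V h t (msmult M a y) = msmult W a (descend V h t y)"
      using d v tt V by simp
  qed
qed

definition lincomb :: "('a::comm_semiring_1, 'v) smod \<Rightarrow> ('s \<Rightarrow> 'v) \<Rightarrow> 's set \<Rightarrow> ('s \<Rightarrow> 'a) \<Rightarrow> 'v" where
  "lincomb P b S c = msum P (\<lambda>p. msmult P (c p) (b p)) S"

lemma smod_hom_lincomb:
  assumes smP: "semimodule P" and b: "\<And>p. p \<in> S \<Longrightarrow> b p \<in> mcarrier P"
  shows "smod_hom (free_smod S) P (lincomb P b S)"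
proof -
  have "lincomb P b S c \<in> mcarrier P" for c
    unfolding lincomb_def using b smP by (auto intro!: msum_closed)
  moreover have "lincomb P b S (c + c') = madd P (lincomb P b S c) (lincomb P b S c')" for c c'
    unfolding lincomb_def
    by (subst msum_add[OF smP, symmetric])
      (use b smP in \<open>auto intro!: msum_cong simp: smod_smult_add_left\<close>)
  moreover have "lincomb P b S 0 = mzero P"
  proof -
    have "msum P (\<lambda>p. msmult P (0 p) (b p)) S = msum P (\<lambda>_. mzero P) S"
      by (rule msum_cong[OF smP refl]) (use b smP in auto)
    then show ?thesis unfolding lincomb_def using msum_zero[OF smP] by simp
  qed
  moreover have "lincomb P b S (\<lambda>s. a * c s) = msmult P a (lincomb P b S c)" for a c
    unfolding lincomb_def
    by (subst msum_smult[OF smP]) (use b smP in \<open>auto intro!: msum_cong simp: smod_smult_mult\<close>)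
  ultimately show ?thesis unfolding smod_hom_def by simp
qed

lemma dual_basis_projective:
  fixes M :: "('a::comm_semiring_1, 'm) smod" and e :: "'s \<Rightarrow> 'm"
  assumes smM: "semimodule M" and e: "\<And>p. p \<in> S \<Longrightarrow> e p \<in> mcarrier M"
    and u: "smod_hom M (free_smod S) u"
    and expand: "\<And>y. y \<in> mcarrier M \<Longrightarrow> msum M (\<lambda>p. msmult M (u y p) (e p)) S = y"
  shows "projective TYPE('v) M"
  unfolding projective_def
proof (intro allI impI, elim conjE)
  fix P :: "('a, 'v) smod" and pr
  assume smP: "semimodule P" and hp: "smod_hom P M pr" and sp: "pr ` mcarrier P = mcarrier M"
  define b where "b p = (SOME b. b \<in> mcarrier P \<and> pr b = e p)" for p
  have b: "b p \<in> mcarrier P \<and> pr (b p) = e p" if "p \<in> S" for p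
  proof -
    have "\<exists>b. b \<in> mcarrier P \<and> pr b = e p" using sp e[OF that] by force
    then show ?thesis unfolding b_def by (rule someI_ex)
  qed
  have "smod_hom M P (\<lambda>y. lincomb P b S (u y))"
    by (rule smod_hom_comp[OF u smod_hom_lincomb[OF smP]]) (use b in blast)
  moreover have "pr (lincomb P b S (u y)) = y" if y: "y \<in> mcarrier M" for y
  proof -
    have "pr (lincomb P b S (u y)) = msum M (\<lambda>p. pr (msmult P (u y p) (b p))) S"
      unfolding lincomb_def by (rule smod_hom_msum[OF smP smM hp]) (use b smP in auto)
    also have "\<dots> = msum M (\<lambda>p. msmult M (u y p) (e p)) S"
      by (rule msum_cong[OF smM refl]) (use b hp smM e in \<open>auto simp: smod_hom_def\<close>)
    also have "\<dots> = y" by (rule expand[OF y])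
    finally show ?thesis .
  qed
  ultimately show "\<exists>s. smod_hom M P s \<and> (\<forall>x\<in>mcarrier M. pr (s x) = x)" by blast
qed

lemma tensor_carrier:
  "mcarrier (tensor N M) = mcarrier (free_smod (mcarrier N \<times> mcarrier M)) // tensor_cong N M"
  by (simp add: tensor_def quot_smod_def)

lemma tmap_class:
  assumes cN: "smod_closed N" and cN': "smod_closed N'" and cM: "smod_closed M"
    and hom: "smod_hom N N' f" and \<phi>: "\<phi> \<in> mcarrier (free_smod (mcarrier N \<times> mcarrier M))"
  shows "tmap N' M f (tensor_cong N M `` {\<phi>}) = tensor_cong N' M `` {push f \<phi>}"
proof -
  let ?X = "tensor_cong N M `` {\<phi>}"
  have "\<phi> \<in> ?X" using tensor_cong_refl[OF cN cM \<phi>] by blast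
  then have "(SOME \<psi>. \<psi> \<in> ?X) \<in> ?X" by (rule someI[of "\<lambda>\<psi>. \<psi> \<in> ?X"])
  then have "(\<phi>, SOME \<psi>. \<psi> \<in> ?X) \<in> tensor_cong N M" by blast
  then have "(push f \<phi>, push f (SOME \<psi>. \<psi> \<in> ?X)) \<in> tensor_cong N' M"
    by (rule push_tensor_cong[OF cN cN' cM hom])
  then show ?thesis
    unfolding tmap_def
    by (rule equiv_class_eq[OF smod_cong_equiv[OF smod_cong_tensor_cong[OF cN' cM]], symmetric])
qed

lemma flat_equaliser:
  fixes M :: "('a::comm_semiring_1, 'm) smod" and N1 N2 :: "('a, 'u) smod"
  assumes "flat TYPE('u) M" "semimodule N1" "semimodule N2" "smod_hom N1 N2 f" "smod_hom N1 N2 g"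
  shows "tmap N1 M id ` mcarrier (tensor (sub_smod N1 {x \<in> mcarrier N1. f x = g x}) M) =
    {y \<in> mcarrier (tensor N1 M). tmap N2 M f y = tmap N2 M g y}"
proof -
  have "\<forall>(N1 :: ('a, 'u) smod) (N2 :: ('a, 'u) smod) f g.
        semimodule N1 \<and> semimodule N2 \<and> smod_hom N1 N2 f \<and> smod_hom N1 N2 g \<longrightarrow>
        (let E = sub_smod N1 {x \<in> mcarrier N1. f x = g x} in
          inj_on (tmap N1 M id) (mcarrier (tensor E M)) \<and>
          tmap N1 M id ` mcarrier (tensor E M) =
            {y \<in> mcarrier (tensor N1 M). tmap N2 M f y = tmap N2 M g y})"
    using assms(1)[unfolded flat_def tensor_exact_def, THEN conjunct2, THEN conjunct2,
        THEN conjunct2, THEN conjunct2, THEN conjunct1] .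
  then show ?thesis using assms(2-5) unfolding Let_def by blast
qed

section \<open>Transport of finite free modules\<close>

text \<open>
  Flatness is only assumed for modules whose carrier lies in \<open>('a \<times> 'm \<times> nat) set\<close>, so vectors
  of \<open>A\<^sup>n\<close> are encoded as their graphs there; the \<open>'m\<close> component is a dummy.
\<close>

definition enc :: "(nat \<Rightarrow> 'a) \<Rightarrow> ('a \<times> 'm \<times> nat) set" where
  "enc \<phi> = {(\<phi> i, undefined, i) | i. True}"

definition dec :: "('a \<times> 'm \<times> nat) set \<Rightarrow> nat \<Rightarrow> 'a" where
  "dec S i = (THE a. (a, undefined, i) \<in> S)"

lemma dec_enc[simp]: "dec (enc \<phi> :: ('a \<times> 'm \<times> nat) set) = \<phi>"
proof
  fix i
  show "dec (enc \<phi> :: ('a \<times> 'm \<times> nat) set) i = \<phi> i"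
    unfolding dec_def enc_def by (rule the_equality) auto
qed

definition enc_smod :: "('a::comm_semiring_1, nat \<Rightarrow> 'a) smod \<Rightarrow> ('a, ('a \<times> 'm \<times> nat) set) smod" where
  "enc_smod V = \<lparr>mcarrier = enc ` mcarrier V, mzero = enc (mzero V),
     madd = (\<lambda>S T. enc (madd V (dec S) (dec T))), msmult = (\<lambda>a S. enc (msmult V a (dec S)))\<rparr>"

lemma enc_smod_carrier: "mcarrier (enc_smod V) = enc ` mcarrier V"
  and enc_smod_smult: "msmult (enc_smod V) a (enc \<phi>) = enc (msmult V a \<phi>)"
  by (simp_all add: enc_smod_def)

lemma semimodule_enc_smod:
  assumes sm: "semimodule V"
  shows "semimodule (enc_smod V :: ('a::comm_semiring_1, ('a \<times> 'm \<times> nat) set) smod)"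
proof -
  note s = smod_add_assoc[OF sm] smod_smult_add_right[OF sm] smod_smult_add_left[OF sm]
    smod_smult_mult[OF sm]
  have c: "x \<in> mcarrier V \<Longrightarrow> y \<in> mcarrier V \<Longrightarrow>
      (enc (madd V x y) :: ('a \<times> 'm \<times> nat) set) = enc (madd V y x)" for x y
    using smod_add_commute[OF sm] by metis
  show ?thesis
    unfolding semimodule_def enc_smod_def
    by (auto simp: s sm c)
qed

lemma enc_smod_hom:
  assumes "smod_hom V W f"
  shows "smod_hom (enc_smod V :: ('a::comm_semiring_1, ('a \<times> 'm \<times> nat) set) smod)
    (enc_smod W :: ('a, ('a \<times> 'm \<times> nat) set) smod) (\<lambda>S. enc (f (dec S)))"
  using assms unfolding smod_hom_def enc_smod_def by auto

lemma enc_hom: "smod_hom V (enc_smod V :: ('a::comm_semiring_1, ('a \<times> 'm \<times> nat) set) smod) enc"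
  unfolding smod_hom_def enc_smod_def by auto

section \<open>Finitely presented modules\<close>

locale fin_presentation =
  fixes M :: "('a::comm_semiring_1, 'm) smod" and k n :: nat
    and f g :: "(nat \<Rightarrow> 'a) \<Rightarrow> nat \<Rightarrow> 'a" and h :: "(nat \<Rightarrow> 'a) \<Rightarrow> 'm"
  assumes smM: "semimodule M"
    and f_hom': "smod_hom (fin_free k) (fin_free n) f"
    and g_hom': "smod_hom (fin_free k) (fin_free n) g"
    and h_hom': "smod_hom (fin_free n) M h"
    and h_onto': "h ` mcarrier (fin_free n) = mcarrier M"
    and h_kernel': "{(x, y). x \<in> mcarrier (fin_free n) \<and> y \<in> mcarrier (fin_free n) \<and> h x = h y} =
      cong_gen (fin_free n) {(f x, g x) | x. x \<in> mcarrier (fin_free k :: ('a, nat \<Rightarrow> 'a) smod)}"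
begin

abbreviation An :: "('a, nat \<Rightarrow> 'a) smod" where "An \<equiv> free_smod {..<n}"
abbreviation Ak :: "('a, nat \<Rightarrow> 'a) smod" where "Ak \<equiv> free_smod {..<k}"

lemma f_hom: "smod_hom Ak An f" using f_hom' by (simp add: fin_free_def)
lemma g_hom: "smod_hom Ak An g" using g_hom' by (simp add: fin_free_def)
lemma h_hom: "smod_hom An M h" using h_hom' by (simp add: fin_free_def)
lemma h_onto: "h ` mcarrier An = mcarrier M" using h_onto' by (simp add: fin_free_def)
lemma h_kernel:
  "{(x, y). x \<in> mcarrier An \<and> y \<in> mcarrier An \<and> h x = h y} = cong_gen An {(f x, g x) | x. x \<in> mcarrier Ak}"
  using h_kernel' by (simp add: fin_free_def)

lemma delta_An: "i < n \<Longrightarrow> delta i \<in> mcarrier An"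
  and delta_Ak: "j < k \<Longrightarrow> delta j \<in> mcarrier Ak"
  by (simp_all add: delta_in_free)

lemma h_closed: "v \<in> mcarrier An \<Longrightarrow> h v \<in> mcarrier M"
  using h_hom by (simp add: smod_hom_def)

lemma h_f_eq_h_g: "x \<in> mcarrier Ak \<Longrightarrow> h (f x) = h (g x)"
  using subsetD[OF cong_gen_incl, of "(f x, g x)" "{(f x, g x) | x. x \<in> mcarrier Ak}" An]
  by (auto simp flip: h_kernel)

definition dual_map :: "((nat \<Rightarrow> 'a) \<Rightarrow> nat \<Rightarrow> 'a) \<Rightarrow> (nat \<Rightarrow> 'a) \<Rightarrow> nat \<Rightarrow> 'a" where
  "dual_map q \<phi> = (\<lambda>j. if j < k then (\<Sum>i<n. \<phi> i * q (delta j) i) else 0)"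

definition An_copy :: "('a, ('a \<times> 'm \<times> nat) set) smod" where "An_copy = enc_smod An"
definition Ak_copy :: "('a, ('a \<times> 'm \<times> nat) set) smod" where "Ak_copy = enc_smod Ak"

definition enc_dual :: "((nat \<Rightarrow> 'a) \<Rightarrow> nat \<Rightarrow> 'a) \<Rightarrow> ('a \<times> 'm \<times> nat) set \<Rightarrow> ('a \<times> 'm \<times> nat) set" where
  "enc_dual q S = enc (dual_map q (dec S))"

definition pairing :: "(nat \<Rightarrow> 'a) \<Rightarrow> ('a \<times> 'm \<times> nat) set \<Rightarrow> 'a" where
  "pairing v w = (\<Sum>i<n. dec w i * v i)"

definition canonical_tensor :: "('a \<times> 'm \<times> nat) set \<times> 'm \<Rightarrow> 'a" where
  "canonical_tensor = (\<Sum>i<n. delta (enc (delta i), h (delta i)))"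

lemma semimodule_An_copy: "semimodule An_copy"
  unfolding An_copy_def by (rule semimodule_enc_smod[OF semimodule_free])

lemma semimodule_Ak_copy: "semimodule Ak_copy"
  unfolding Ak_copy_def by (rule semimodule_enc_smod[OF semimodule_free])

lemma An_copy_carrier: "mcarrier An_copy = enc ` mcarrier An"
  by (simp add: An_copy_def enc_smod_carrier)

lemma Ak_copy_carrier: "mcarrier Ak_copy = enc ` mcarrier Ak"
  by (simp add: Ak_copy_def enc_smod_carrier)

lemma dual_map_hom: "smod_hom An Ak (dual_map q)"
proof -
  have "(\<lambda>j. if j < k then (\<Sum>i<n. \<phi> i * q (delta j) i) else 0) \<in> mcarrier Ak" for \<phi>
    by (rule free_carrierI) (auto simp: supp_def intro: finite_subset[of _ "{..<k}"])
  then show ?thesis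
    unfolding smod_hom_def
    by (auto simp: dual_map_def fun_eq_iff sum.distrib distrib_right sum_distrib_left mult.assoc)
qed

lemma enc_dual_hom: "smod_hom An_copy Ak_copy (enc_dual q)"
  unfolding An_copy_def Ak_copy_def enc_dual_def[abs_def] by (rule enc_smod_hom[OF dual_map_hom])

lemma dual_map_delta: "i < n \<Longrightarrow> dual_map q (delta i) = (\<lambda>j. if j < k then q (delta j) i else 0)"
  by (rule ext) (simp add: dual_map_def sum_delta_mult)

lemma pairing_add: "pairing v (madd An_copy x y) = pairing v x + pairing v y"
  by (simp add: pairing_def An_copy_def enc_smod_def sum.distrib distrib_right)

lemma pairing_smult: "pairing v (msmult An_copy a x) = a * pairing v x"
  by (simp add: pairing_def An_copy_def enc_smod_def sum_distrib_left mult.assoc)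

lemma pairing_enc_delta: "i < n \<Longrightarrow> pairing v (enc (delta i)) = v i"
  by (simp add: pairing_def sum_delta_mult)

lemma pairing_hom_apply:
  assumes q: "smod_hom Ak An q" and x: "x \<in> mcarrier Ak"
  shows "pairing (q x) (enc e) = (\<Sum>j<k. x j * dual_map q e j)"
proof -
  have "pairing (q x) (enc e) = (\<Sum>i<n. e i * (\<Sum>j<k. x j * q (delta j) i))"
    by (simp add: pairing_def fin_free_hom_apply[OF q x])
  also have "\<dots> = (\<Sum>j<k. \<Sum>i<n. x j * (e i * q (delta j) i))"
    by (simp add: sum_distrib_left mult.left_commute sum.swap[of _ "{..<n}"])
  also have "\<dots> = (\<Sum>j<k. x j * dual_map q e j)"
    by (rule sum.cong) (auto simp: dual_map_def sum_distrib_left)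
  finally show ?thesis .
qed

lemma canonical_tensor_in_free: "canonical_tensor \<in> mcarrier (free_smod (mcarrier An_copy \<times> mcarrier M))"
  unfolding canonical_tensor_def
  by (rule free_sum_closed, rule delta_in_free) (auto simp: An_copy_carrier intro!: h_closed delta_An)

lemma contract_canonical_tensor:
  assumes v: "v \<in> mcarrier An"
  shows "contract M (pairing v) canonical_tensor = h v"
proof -
  note contract = smod_hom_contract[OF smM, where lam = "pairing v" and X = "mcarrier An_copy"] contract_delta[OF smM]
  have dc: "i < n \<Longrightarrow> (delta (enc (delta i), h (delta i)) :: _ \<Rightarrow> 'a)
      \<in> mcarrier (free_smod (mcarrier An_copy \<times> mcarrier M))" for i
    by (rule delta_in_free) (auto simp: An_copy_carrier intro!: h_closed delta_An)
  have "canonical_tensor =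
      msum (free_smod (mcarrier An_copy \<times> mcarrier M)) (\<lambda>i. delta (enc (delta i), h (delta i))) {..<n}"
    unfolding canonical_tensor_def by (rule msum_free[symmetric]) (use dc in auto)
  then have "contract M (pairing v) canonical_tensor =
      msum M (\<lambda>i. contract M (pairing v) (delta (enc (delta i), h (delta i)))) {..<n}"
    by (simp only:) (rule smod_hom_msum[OF semimodule_free smM contract(1)], use dc in auto)
  also have "\<dots> = msum M (\<lambda>i. msmult M (v i) (h (delta i))) {..<n}"
    by (rule msum_cong[OF smM refl])
      (auto simp: contract(2) pairing_enc_delta An_copy_carrier smM h_closed delta_An)
  also have "\<dots> = h v" using fin_free_hom_expand[OF smM h_hom v] by simp
  finally show ?thesis .
qed

lemma enc_dual_map_delta:
  assumes i: "i < n"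
  shows "(enc (dual_map q (delta i)) :: ('a \<times> 'm \<times> nat) set) =
    msum Ak_copy (\<lambda>j. msmult Ak_copy (q (delta j) i) (enc (delta j))) {..<k}"
proof -
  have "dual_map q (delta i) = (\<Sum>j<k. (\<lambda>s. q (delta j) i * delta j s))"
    by (simp add: dual_map_delta[OF i] sum_smult_delta)
  also have "\<dots> = msum Ak (\<lambda>j. msmult Ak (q (delta j) i) (delta j)) {..<k}"
    by (simp only: free_simps) (rule msum_free[symmetric], auto intro: free_smult_closed delta_Ak)
  finally have "dual_map q (delta i) = msum Ak (\<lambda>j. msmult Ak (q (delta j) i) (delta j)) {..<k}" .
  then have "(enc (dual_map q (delta i)) :: ('a \<times> 'm \<times> nat) set) =
      msum Ak_copy (\<lambda>j. enc (msmult Ak (q (delta j) i) (delta j))) {..<k}"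
    unfolding Ak_copy_def
    by (simp only:) (rule smod_hom_msum[OF semimodule_free semimodule_enc_smod[OF semimodule_free] enc_hom],
        auto intro: free_smult_closed delta_Ak)
  also have "\<dots> = msum Ak_copy (\<lambda>j. msmult Ak_copy (q (delta j) i) (enc (delta j))) {..<k}"
    by (rule msum_cong[OF semimodule_Ak_copy refl])
      (auto simp: Ak_copy_def enc_smod_smult enc_smod_carrier delta_Ak intro!: imageI free_smult_closed)
  finally show ?thesis .
qed

lemma push_enc_dual_canonical_tensor:
  assumes q: "smod_hom Ak An q"
  shows "(push (enc_dual q) canonical_tensor, \<Sum>j<k. delta (enc (delta j), h (q (delta j)))) \<in> tensor_cong Ak_copy M"
proof -
  note cAk = semimodule_smod_closed[OF semimodule_Ak_copy] and cM = semimodule_smod_closed[OF smM]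
  have qc: "j < k \<Longrightarrow> q (delta j) \<in> mcarrier An" for j using q delta_Ak by (simp add: smod_hom_def)
  have ed: "j < k \<Longrightarrow> (enc (delta j) :: ('a \<times> 'm \<times> nat) set) \<in> mcarrier Ak_copy" for j
    by (simp add: Ak_copy_carrier delta_Ak)
  have dc: "i < n \<Longrightarrow> (delta (enc (delta i), h (delta i)) :: _ \<Rightarrow> 'a)
      \<in> mcarrier (free_smod (mcarrier An_copy \<times> mcarrier M))" for i
    by (rule delta_in_free) (auto simp: An_copy_carrier intro!: h_closed delta_An)
  let ?T = "\<lambda>i j. delta (enc (delta j) :: ('a \<times> 'm \<times> nat) set, msmult M (q (delta j) i) (h (delta i)))
    :: _ \<Rightarrow> 'a"
  have push_eq: "push (enc_dual q) canonical_tensor = (\<Sum>i<n. delta (enc (dual_map q (delta i)), h (delta i)))"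
    unfolding canonical_tensor_def by (subst push_sum[OF dc]) (auto simp: push_delta enc_dual_def)
  have "(delta (enc (dual_map q (delta i)), h (delta i)), \<Sum>j<k. ?T i j) \<in> tensor_cong Ak_copy M"
    if i: "i < n" for i
    unfolding enc_dual_map_delta[OF i]
    by (rule tensor_cong_msum_left[OF semimodule_Ak_copy cM]) (auto intro: ed h_closed delta_An i)
  then have "(push (enc_dual q) canonical_tensor, \<Sum>i<n. \<Sum>j<k. ?T i j) \<in> tensor_cong Ak_copy M"
    unfolding push_eq by (intro tensor_cong_sum[OF cAk cM]) simp
  moreover have "(\<Sum>i<n. \<Sum>j<k. ?T i j) = (\<Sum>j<k. \<Sum>i<n. ?T i j)"
    by (rule sum.swap)
  ultimately have "(push (enc_dual q) canonical_tensor, \<Sum>j<k. \<Sum>i<n. ?T i j) \<in> tensor_cong Ak_copy M"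
    by (simp only:)
  moreover have "(\<Sum>i<n. ?T i j, delta (enc (delta j), h (q (delta j)))) \<in> tensor_cong Ak_copy M"
    if j: "j < k" for j
  proof -
    have "h (q (delta j)) = msum M (\<lambda>i. msmult M (q (delta j) i) (h (delta i))) {..<n}"
      by (rule fin_free_hom_expand[OF smM h_hom qc[OF j]])
    then show ?thesis
      using tensor_cong_msum_right[OF cAk smM finite_lessThan,
          where x="\<lambda>i. msmult M (q (delta j) i) (h (delta i))" and w="enc (delta j)"]
        ed[OF j] smM h_closed delta_An by auto
  qed
  then have "(\<Sum>j<k. \<Sum>i<n. ?T i j, \<Sum>j<k. delta (enc (delta j), h (q (delta j)))) \<in> tensor_cong Ak_copy M"
    by (intro tensor_cong_sum[OF cAk cM]) simp
  ultimately show ?thesis by (rule tensor_cong_trans[OF cAk cM])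
qed

lemma canonical_tensor_equalised:
  "tmap Ak_copy M (enc_dual f) (tensor_cong An_copy M `` {canonical_tensor}) =
   tmap Ak_copy M (enc_dual g) (tensor_cong An_copy M `` {canonical_tensor})"
proof -
  note cAn = semimodule_smod_closed[OF semimodule_An_copy] and cAk = semimodule_smod_closed[OF semimodule_Ak_copy]
    and cM = semimodule_smod_closed[OF smM]
  have eq: "(\<Sum>j<k. delta (enc (delta j), h (f (delta j)))) = (\<Sum>j<k. delta (enc (delta j), h (g (delta j))))"
    by (rule sum.cong) (auto simp: h_f_eq_h_g delta_Ak)
  have "(\<Sum>j<k. delta (enc (delta j), h (f (delta j))), push (enc_dual g) canonical_tensor)
      \<in> tensor_cong Ak_copy M"
    unfolding eq by (rule tensor_cong_sym[OF cAk cM push_enc_dual_canonical_tensor[OF g_hom]])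
  then have "(push (enc_dual f) canonical_tensor, push (enc_dual g) canonical_tensor) \<in> tensor_cong Ak_copy M"
    by (rule tensor_cong_trans[OF cAk cM push_enc_dual_canonical_tensor[OF f_hom]])
  then show ?thesis
    unfolding tmap_class[OF cAn cAk cM enc_dual_hom canonical_tensor_in_free]
    by (rule equiv_class_eq[OF smod_cong_equiv[OF smod_cong_tensor_cong[OF cAk cM]]])
qed

abbreviation equaliser :: "('a \<times> 'm \<times> nat) set set" where
  "equaliser \<equiv> {x \<in> mcarrier An_copy. enc_dual f x = enc_dual g x}"

lemma canonical_tensor_from_equaliser:
  assumes "flat TYPE(('a \<times> 'm \<times> nat) set) M"
  obtains \<psi> where "\<psi> \<in> mcarrier (free_smod (equaliser \<times> mcarrier M))"
    and "(canonical_tensor, \<psi>) \<in> tensor_cong An_copy M"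
proof -
  note cAn = semimodule_smod_closed[OF semimodule_An_copy] and cM = semimodule_smod_closed[OF smM]
  let ?E = "sub_smod An_copy equaliser"
  have E_carrier: "mcarrier ?E = equaliser" by (simp add: sub_smod_def)
  have cE: "smod_closed ?E"
    using enc_dual_hom[of f] enc_dual_hom[of g] cAn
    unfolding smod_closed_def sub_smod_def smod_hom_def by auto
  have incl: "smod_hom ?E An_copy id"
    by (simp add: smod_hom_def sub_smod_def)
  have "tensor_cong An_copy M `` {canonical_tensor} \<in> mcarrier (tensor An_copy M)"
    by (simp add: tensor_carrier quotientI canonical_tensor_in_free)
  then have "tensor_cong An_copy M `` {canonical_tensor} \<in> tmap An_copy M id ` mcarrier (tensor ?E M)"
    unfolding flat_equaliser[OF assms semimodule_An_copy semimodule_Ak_copy enc_dual_hom enc_dual_hom]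
    using canonical_tensor_equalised by blast
  then obtain \<psi> where \<psi>: "\<psi> \<in> mcarrier (free_smod (equaliser \<times> mcarrier M))"
    and eq: "tensor_cong An_copy M `` {canonical_tensor} = tmap An_copy M id (tensor_cong ?E M `` {\<psi>})"
    unfolding tensor_carrier E_carrier by (auto elim!: quotientE)
  have "tensor_cong An_copy M `` {canonical_tensor} = tensor_cong An_copy M `` {\<psi>}"
    using eq tmap_class[OF cE cAn cM incl] \<psi> E_carrier by (simp add: push_id)
  then have "(canonical_tensor, \<psi>) \<in> tensor_cong An_copy M"
    using eq_equiv_class_iff[OF smod_cong_equiv[OF smod_cong_tensor_cong[OF cAn cM]]]
      canonical_tensor_in_free tensor_cong_carrier[OF cAn cM] by blast
  with \<psi> show thesis by (rule that)
qed

definition coord :: "(('a \<times> 'm \<times> nat) set \<times> 'm \<Rightarrow> 'a) \<Rightarrow> (nat \<Rightarrow> 'a) \<Rightarrow> ('a \<times> 'm \<times> nat) set \<times> 'm \<Rightarrow> 'a"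
  where "coord \<psi> v p = (if p \<in> supp \<psi> then \<psi> p * pairing v (fst p) else 0)"

context
  fixes \<psi> :: "('a \<times> 'm \<times> nat) set \<times> 'm \<Rightarrow> 'a"
  assumes \<psi>_free: "\<psi> \<in> mcarrier (free_smod (equaliser \<times> mcarrier M))"
    and \<psi>_rel: "(canonical_tensor, \<psi>) \<in> tensor_cong An_copy M"
begin

lemma supp_\<psi>: "finite (supp \<psi>)" "supp \<psi> \<subseteq> equaliser \<times> mcarrier M"
  using free_finite_supp[OF \<psi>_free] free_supp_subset[OF \<psi>_free] by auto

lemma coord_hom: "smod_hom An (free_smod (supp \<psi>)) (coord \<psi>)"
proof -
  have "coord \<psi> v \<in> mcarrier (free_smod (supp \<psi>))" for v
    by (rule free_carrierI) (auto simp: supp_def coord_def intro: finite_subset[OF _ supp_\<psi>(1)])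
  then show ?thesis
    unfolding smod_hom_def
    by (auto simp: coord_def pairing_def fun_eq_iff distrib_left sum.distrib sum_distrib_left
        mult.left_commute)
qed

lemma h_coord_expansion:
  assumes v: "v \<in> mcarrier An"
  shows "h v = msum M (\<lambda>p. msmult M (coord \<psi> v p) (snd p)) (supp \<psi>)"
proof -
  note cAn = semimodule_smod_closed[OF semimodule_An_copy]
  have "h v = contract M (pairing v) \<psi>"
    using contract_canonical_tensor[OF v]
      contract_tensor_cong[OF cAn smM pairing_add[of v] pairing_smult[of v] \<psi>_rel] by simp
  also have "\<dots> = msum M (\<lambda>p. msmult M (coord \<psi> v p) (snd p)) (supp \<psi>)"
    unfolding contract_def by (rule msum_cong[OF smM refl]) (use supp_\<psi>(2) smM in \<open>auto simp: coord_def\<close>)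
  finally show ?thesis .
qed

lemma coord_f_eq_coord_g:
  assumes x: "x \<in> mcarrier Ak"
  shows "coord \<psi> (f x) = coord \<psi> (g x)"
proof
  fix p
  show "coord \<psi> (f x) p = coord \<psi> (g x) p"
  proof (cases "p \<in> supp \<psi>")
    case True
    then have "fst p \<in> equaliser" using supp_\<psi>(2) by auto
    then obtain e where e: "fst p = enc e" "enc_dual f (enc e) = enc_dual g (enc e)"
      by (auto simp: An_copy_carrier)
    then have "dual_map f e = dual_map g e" unfolding enc_dual_def by (metis dec_enc)
    then have "pairing (f x) (fst p) = pairing (g x) (fst p)"
      unfolding e(1) by (simp add: pairing_hom_apply[OF f_hom x] pairing_hom_apply[OF g_hom x])
    then show ?thesis by (simp add: coord_def)
  qed (simp add: coord_def)
qed

lemma coord_compat: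
  assumes "v \<in> mcarrier An" "v' \<in> mcarrier An" "h v = h v'"
  shows "coord \<psi> v = coord \<psi> v'"
proof (rule smod_hom_cong_gen_eq[OF smod_closed_free coord_hom])
  show "(v, v') \<in> cong_gen An {(f x, g x) | x. x \<in> mcarrier Ak}"
    using assms by (simp flip: h_kernel)
next
  fix x y assume "(x, y) \<in> {(f x, g x) | x. x \<in> mcarrier Ak}"
  then obtain z where "z \<in> mcarrier Ak" "x = f z" "y = g z" by blast
  then show "x \<in> mcarrier An \<and> y \<in> mcarrier An \<and> coord \<psi> x = coord \<psi> y"
    using f_hom g_hom coord_f_eq_coord_g by (simp add: smod_hom_def)
qed

theorem projective_from_representative: "projective TYPE('v) M"
proof (rule dual_basis_projective[OF smM])
  show "smod_hom M (free_smod (supp \<psi>)) (descend An h (coord \<psi>))"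
    by (rule smod_hom_descend[OF smod_closed_free h_hom h_onto coord_hom coord_compat])
  show "snd p \<in> mcarrier M" if "p \<in> supp \<psi>" for p
    using that supp_\<psi>(2) by auto
  fix y assume "y \<in> mcarrier M"
  then obtain v where v: "v \<in> mcarrier An" "y = h v" using h_onto by blast
  have "descend An h (coord \<psi>) (h v) = coord \<psi> v"
    by (rule descend_apply[OF v(1)]) (rule coord_compat)
  then show "msum M (\<lambda>p. msmult M (descend An h (coord \<psi>) y p) (snd p)) (supp \<psi>) = y"
    using h_coord_expansion[OF v(1)] v(2) by simp
qed

end

end

theorem mainTheorem6:
  fixes M :: "('a::comm_semiring_1, 'm) smod"
  assumes "semimodule M"
    and "fin_presented M"
    and "flat TYPE(('a \<times> 'm \<times> nat) set) M"
  shows "projective TYPE('v) M"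
proof -
  obtain k n f g h where "fin_presentation M k n f g h"
    using assms(2) unfolding fin_presented_def
    by (elim exE conjE) (rule that, intro fin_presentation.intro assms(1))
  then interpret fin_presentation M k n f g h .
  obtain \<psi> where "\<psi> \<in> mcarrier (free_smod (equaliser \<times> mcarrier M))"
    and "(canonical_tensor, \<psi>) \<in> tensor_cong An_copy M"
    using canonical_tensor_from_equaliser[OF assms(3)] .
  then show ?thesis by (rule projective_from_representative)
qed
end
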